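(* For every M$\Delta$C $\mathbf K$ the following are equivalent: (a) there exist two coprime proper thick ideals of $\mathbf K$; (b) there exist two distinct maximal ideals of $\mathbf K$; (c) there exist two coprime proper principal ideals of $\mathbf K$; (d) $\operatorname{Spc}\mathbf K$ is reducible, i.e. there exist proper closed subsets $Z_1,Z_2\subsetneq\operatorname{Spc}\mathbf K$ with $\operatorname{Spc}\mathbf K=Z_1\cup Z_2$.
   Context: M$\Delta$C: triangulated category with monoidal structure $(\otimes,\mathbf 1)$, $\otimes$ exact in each variable (no rigidity, generation or Noetherian assumptions). Thick ideal: full triangulated subcategory closed under direct summands and under $A\mapsto A\otimes B$, $B\otimes A$ for all $B\in\mathbf K$. $\langle\mathcal S\rangle$ = smallest thick ideal containing $\mathcal S$; principal ideal = $\langle A\rangle$ for a single object $A$; $\mathbf I,\mathbf J$ coprime if $\langle\mathbf I\cup\mathbf J\rangle=\mathbf K$; a maximal ideal is a maximal proper thick ideal. A proper thick ideal $\mathbf P$ is prime if for all thick ideals $\mathbf I,\mathbf J$, $\mathbf I\otimes\mathbf J\subseteq\mathbf P$ (i.e. $A\otimes B\in\mathbf P$ for all $A\in\mathbf I,B\in\mathbf J$) implies $\mathbf I\subseteq\mathbf P$ or $\mathbf J\subseteq\mathbf P$. $\operatorname{Spc}\mathbf K$ is the set of prime ideals with the topology whose closed sets are the intersections of the basic closed sets $V(A)=\{\mathbf P:A\notin\mathbf P\}$, $A\in\mathbf K$. *)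

theory Defs
  imports Main
begin

text \<open>A category is encoded by a set of objects, a set of arrows with domain/codomain,
identities and composition (cComp g f = g o f). The additive structure, zero object,
(chosen) biproducts, the shift functor, the class of distinguished triangles
(u : X -> Y, v : Y -> Z, w : Z -> Sigma X), and the monoidal structure are further data.\<close>

record ('o, 'm) mdc =
  cOb    :: "'o set"
  cAr    :: "'m set"
  cDom   :: "'m \<Rightarrow> 'o"
  cCod   :: "'m \<Rightarrow> 'o"
  cId    :: "'o \<Rightarrow> 'm"
  cComp  :: "'m \<Rightarrow> 'm \<Rightarrow> 'm"
  cPlus  :: "'m \<Rightarrow> 'm \<Rightarrow> 'm"
  cNeg   :: "'m \<Rightarrow> 'm"
  cZero  :: "'o \<Rightarrow> 'o \<Rightarrow> 'm"
  cZobj  :: "'o"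
  cSum   :: "'o \<Rightarrow> 'o \<Rightarrow> 'o"
  cIn1   :: "'o \<Rightarrow> 'o \<Rightarrow> 'm"
  cIn2   :: "'o \<Rightarrow> 'o \<Rightarrow> 'm"
  cPr1   :: "'o \<Rightarrow> 'o \<Rightarrow> 'm"
  cPr2   :: "'o \<Rightarrow> 'o \<Rightarrow> 'm"
  cShift :: "'o \<Rightarrow> 'o"
  cShiftM :: "'m \<Rightarrow> 'm"
  cDist  :: "('m \<times> 'm \<times> 'm) set"
  cTen   :: "'o \<Rightarrow> 'o \<Rightarrow> 'o"
  cTenM  :: "'m \<Rightarrow> 'm \<Rightarrow> 'm"
  cUnit  :: "'o"
  cAssoc :: "'o \<Rightarrow> 'o \<Rightarrow> 'o \<Rightarrow> 'm"
  cLunit :: "'o \<Rightarrow> 'm"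
  cRunit :: "'o \<Rightarrow> 'm"

definition hom :: "('o,'m) mdc \<Rightarrow> 'o \<Rightarrow> 'o \<Rightarrow> 'm set" where
  "hom K X Y = {f \<in> cAr K. cDom K f = X \<and> cCod K f = Y}"

definition is_iso :: "('o,'m) mdc \<Rightarrow> 'm \<Rightarrow> bool" where
  "is_iso K f \<longleftrightarrow> f \<in> cAr K \<and>
     (\<exists>g \<in> hom K (cCod K f) (cDom K f).
        cComp K g f = cId K (cDom K f) \<and> cComp K f g = cId K (cCod K f))"

definition isomorphic :: "('o,'m) mdc \<Rightarrow> 'o \<Rightarrow> 'o \<Rightarrow> bool" where
  "isomorphic K X Y \<longleftrightarrow> (\<exists>f \<in> hom K X Y. is_iso K f)"

definition is_category :: "('o,'m) mdc \<Rightarrow> bool" where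
  "is_category K \<longleftrightarrow>
     (\<forall>f \<in> cAr K. cDom K f \<in> cOb K \<and> cCod K f \<in> cOb K) \<and>
     (\<forall>X \<in> cOb K. cId K X \<in> hom K X X) \<and>
     (\<forall>f \<in> cAr K. \<forall>g \<in> cAr K. cCod K f = cDom K g \<longrightarrow>
         cComp K g f \<in> hom K (cDom K f) (cCod K g)) \<and>
     (\<forall>f \<in> cAr K. cComp K f (cId K (cDom K f)) = f \<and> cComp K (cId K (cCod K f)) f = f) \<and>
     (\<forall>f \<in> cAr K. \<forall>g \<in> cAr K. \<forall>h \<in> cAr K. cCod K f = cDom K g \<longrightarrow> cCod K g = cDom K h \<longrightarrow>
         cComp K h (cComp K g f) = cComp K (cComp K h g) f)"

definition is_additive :: "('o,'m) mdc \<Rightarrow> bool" where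
  "is_additive K \<longleftrightarrow>
     (\<forall>X \<in> cOb K. \<forall>Y \<in> cOb K.
        cZero K X Y \<in> hom K X Y \<and>
        (\<forall>f \<in> hom K X Y. \<forall>g \<in> hom K X Y. cPlus K f g \<in> hom K X Y) \<and>
        (\<forall>f \<in> hom K X Y. cNeg K f \<in> hom K X Y) \<and>
        (\<forall>f \<in> hom K X Y. \<forall>g \<in> hom K X Y. \<forall>h \<in> hom K X Y.
            cPlus K (cPlus K f g) h = cPlus K f (cPlus K g h)) \<and>
        (\<forall>f \<in> hom K X Y. \<forall>g \<in> hom K X Y. cPlus K f g = cPlus K g f) \<and>
        (\<forall>f \<in> hom K X Y. cPlus K f (cZero K X Y) = f) \<and>
        (\<forall>f \<in> hom K X Y. cPlus K f (cNeg K f) = cZero K X Y)) \<and>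
     (\<forall>X \<in> cOb K. \<forall>Y \<in> cOb K. \<forall>Z \<in> cOb K.
        \<forall>f \<in> hom K X Y. \<forall>f' \<in> hom K X Y. \<forall>g \<in> hom K Y Z. \<forall>g' \<in> hom K Y Z.
          cComp K g (cPlus K f f') = cPlus K (cComp K g f) (cComp K g f') \<and>
          cComp K (cPlus K g g') f = cPlus K (cComp K g f) (cComp K g' f)) \<and>
     cZobj K \<in> cOb K \<and>
     (\<forall>X \<in> cOb K. hom K (cZobj K) X = {cZero K (cZobj K) X} \<and>
                   hom K X (cZobj K) = {cZero K X (cZobj K)}) \<and>
     (\<forall>X \<in> cOb K. \<forall>Y \<in> cOb K.
        cSum K X Y \<in> cOb K \<and>
        cIn1 K X Y \<in> hom K X (cSum K X Y) \<and> cIn2 K X Y \<in> hom K Y (cSum K X Y) \<and>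
        cPr1 K X Y \<in> hom K (cSum K X Y) X \<and> cPr2 K X Y \<in> hom K (cSum K X Y) Y \<and>
        cComp K (cPr1 K X Y) (cIn1 K X Y) = cId K X \<and>
        cComp K (cPr2 K X Y) (cIn2 K X Y) = cId K Y \<and>
        cComp K (cPr2 K X Y) (cIn1 K X Y) = cZero K X Y \<and>
        cComp K (cPr1 K X Y) (cIn2 K X Y) = cZero K Y X \<and>
        cPlus K (cComp K (cIn1 K X Y) (cPr1 K X Y)) (cComp K (cIn2 K X Y) (cPr2 K X Y))
          = cId K (cSum K X Y))"

definition shift_equivalence :: "('o,'m) mdc \<Rightarrow> bool" where
  "shift_equivalence K \<longleftrightarrow>
     (\<forall>X \<in> cOb K. cShift K X \<in> cOb K) \<and>
     (\<forall>f \<in> cAr K. cShiftM K f \<in> hom K (cShift K (cDom K f)) (cShift K (cCod K f))) \<and>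
     (\<forall>X \<in> cOb K. cShiftM K (cId K X) = cId K (cShift K X)) \<and>
     (\<forall>f \<in> cAr K. \<forall>g \<in> cAr K. cCod K f = cDom K g \<longrightarrow>
        cShiftM K (cComp K g f) = cComp K (cShiftM K g) (cShiftM K f)) \<and>
     (\<forall>X \<in> cOb K. \<forall>Y \<in> cOb K. \<forall>f \<in> hom K X Y. \<forall>g \<in> hom K X Y.
        cShiftM K (cPlus K f g) = cPlus K (cShiftM K f) (cShiftM K g)) \<and>
     (\<forall>X \<in> cOb K. \<forall>Y \<in> cOb K.
        bij_betw (cShiftM K) (hom K X Y) (hom K (cShift K X) (cShift K Y))) \<and>
     (\<forall>Y \<in> cOb K. \<exists>X \<in> cOb K. isomorphic K (cShift K X) Y)"

definition is_triangle :: "('o,'m) mdc \<Rightarrow> 'm \<times> 'm \<times> 'm \<Rightarrow> bool" where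
  "is_triangle K T \<longleftrightarrow> (case T of (u, v, w) \<Rightarrow>
     u \<in> cAr K \<and> v \<in> cAr K \<and> w \<in> cAr K \<and> cCod K u = cDom K v \<and> cCod K v = cDom K w \<and>
     cCod K w = cShift K (cDom K u))"

definition tri_morph :: "('o,'m) mdc \<Rightarrow> 'm \<times> 'm \<times> 'm \<Rightarrow> 'm \<times> 'm \<times> 'm \<Rightarrow> 'm \<Rightarrow> 'm \<Rightarrow> 'm \<Rightarrow> bool" where
  "tri_morph K T T' a b c \<longleftrightarrow> (case T of (u, v, w) \<Rightarrow> case T' of (u', v', w') \<Rightarrow>
     a \<in> hom K (cDom K u) (cDom K u') \<and> b \<in> hom K (cDom K v) (cDom K v') \<and>
     c \<in> hom K (cDom K w) (cDom K w') \<and>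
     cComp K u' a = cComp K b u \<and> cComp K v' b = cComp K c v \<and>
     cComp K w' c = cComp K (cShiftM K a) w)"

definition is_triangulated :: "('o,'m) mdc \<Rightarrow> bool" where
  "is_triangulated K \<longleftrightarrow>
     \<comment> \<open>TR1\<close>
     (\<forall>T \<in> cDist K. is_triangle K T) \<and>
     (\<forall>T \<in> cDist K. \<forall>T'. is_triangle K T' \<and>
        (\<exists>a b c. tri_morph K T T' a b c \<and> is_iso K a \<and> is_iso K b \<and> is_iso K c) \<longrightarrow> T' \<in> cDist K) \<and>
     (\<forall>X \<in> cOb K. (cId K X, cZero K X (cZobj K), cZero K (cZobj K) (cShift K X)) \<in> cDist K) \<and>
     (\<forall>u \<in> cAr K. \<exists>v w. (u, v, w) \<in> cDist K) \<and>
     \<comment> \<open>TR2 (rotation)\<close>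
     (\<forall>u v w. is_triangle K (u, v, w) \<longrightarrow>
        ((u, v, w) \<in> cDist K \<longleftrightarrow> (v, w, cNeg K (cShiftM K u)) \<in> cDist K)) \<and>
     \<comment> \<open>TR3\<close>
     (\<forall>u v w u' v' w' a b. (u, v, w) \<in> cDist K \<longrightarrow> (u', v', w') \<in> cDist K \<longrightarrow>
        a \<in> hom K (cDom K u) (cDom K u') \<longrightarrow> b \<in> hom K (cDom K v) (cDom K v') \<longrightarrow>
        cComp K u' a = cComp K b u \<longrightarrow>
        (\<exists>c. tri_morph K (u, v, w) (u', v', w') a b c)) \<and>
     \<comment> \<open>TR4 (octahedral axiom)\<close>
     (\<forall>u v j k l i m n. (u, j, k) \<in> cDist K \<longrightarrow> (v, l, i) \<in> cDist K \<longrightarrow>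
        (cComp K v u, m, n) \<in> cDist K \<longrightarrow> cCod K u = cDom K v \<longrightarrow>
        (\<exists>f g. f \<in> hom K (cCod K j) (cCod K m) \<and> g \<in> hom K (cCod K m) (cCod K l) \<and>
           cComp K f j = cComp K m v \<and> cComp K n f = k \<and> cComp K g m = l \<and>
           cComp K i g = cComp K (cShiftM K u) n \<and>
           (f, g, cComp K (cShiftM K j) i) \<in> cDist K))"

definition is_monoidal :: "('o,'m) mdc \<Rightarrow> bool" where
  "is_monoidal K \<longleftrightarrow>
     (\<forall>A \<in> cOb K. \<forall>B \<in> cOb K. cTen K A B \<in> cOb K) \<and>
     (\<forall>f \<in> cAr K. \<forall>g \<in> cAr K.
        cTenM K f g \<in> hom K (cTen K (cDom K f) (cDom K g)) (cTen K (cCod K f) (cCod K g))) \<and>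
     (\<forall>A \<in> cOb K. \<forall>B \<in> cOb K. cTenM K (cId K A) (cId K B) = cId K (cTen K A B)) \<and>
     (\<forall>f \<in> cAr K. \<forall>f' \<in> cAr K. \<forall>g \<in> cAr K. \<forall>g' \<in> cAr K.
        cCod K f = cDom K f' \<longrightarrow> cCod K g = cDom K g' \<longrightarrow>
        cTenM K (cComp K f' f) (cComp K g' g) = cComp K (cTenM K f' g') (cTenM K f g)) \<and>
     cUnit K \<in> cOb K \<and>
     (\<forall>A \<in> cOb K. \<forall>B \<in> cOb K. \<forall>C \<in> cOb K.
        cAssoc K A B C \<in> hom K (cTen K (cTen K A B) C) (cTen K A (cTen K B C)) \<and>
        is_iso K (cAssoc K A B C)) \<and>
     (\<forall>f \<in> cAr K. \<forall>g \<in> cAr K. \<forall>h \<in> cAr K.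
        cComp K (cAssoc K (cCod K f) (cCod K g) (cCod K h)) (cTenM K (cTenM K f g) h) =
        cComp K (cTenM K f (cTenM K g h)) (cAssoc K (cDom K f) (cDom K g) (cDom K h))) \<and>
     (\<forall>A \<in> cOb K. cLunit K A \<in> hom K (cTen K (cUnit K) A) A \<and> is_iso K (cLunit K A) \<and>
                   cRunit K A \<in> hom K (cTen K A (cUnit K)) A \<and> is_iso K (cRunit K A)) \<and>
     (\<forall>f \<in> cAr K.
        cComp K (cLunit K (cCod K f)) (cTenM K (cId K (cUnit K)) f) = cComp K f (cLunit K (cDom K f)) \<and>
        cComp K (cRunit K (cCod K f)) (cTenM K f (cId K (cUnit K))) = cComp K f (cRunit K (cDom K f))) \<and>
     (\<forall>A \<in> cOb K. \<forall>B \<in> cOb K. \<forall>C \<in> cOb K. \<forall>D \<in> cOb K.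
        cComp K (cAssoc K A B (cTen K C D)) (cAssoc K (cTen K A B) C D) =
        cComp K (cTenM K (cId K A) (cAssoc K B C D))
          (cComp K (cAssoc K A (cTen K B C) D) (cTenM K (cAssoc K A B C) (cId K D)))) \<and>
     (\<forall>A \<in> cOb K. \<forall>B \<in> cOb K.
        cComp K (cTenM K (cId K A) (cLunit K B)) (cAssoc K A (cUnit K) B) =
        cTenM K (cRunit K A) (cId K B))"

definition tensor_exact :: "('o,'m) mdc \<Rightarrow> bool" where
  "tensor_exact K \<longleftrightarrow>
     (\<forall>A \<in> cOb K.
       (\<forall>X \<in> cOb K. \<forall>Y \<in> cOb K. \<forall>f \<in> hom K X Y. \<forall>g \<in> hom K X Y.
          cTenM K (cId K A) (cPlus K f g) = cPlus K (cTenM K (cId K A) f) (cTenM K (cId K A) g) \<and>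
          cTenM K (cPlus K f g) (cId K A) = cPlus K (cTenM K f (cId K A)) (cTenM K g (cId K A))) \<and>
       (\<exists>\<tau>. (\<forall>X \<in> cOb K. \<tau> X \<in> hom K (cTen K A (cShift K X)) (cShift K (cTen K A X)) \<and> is_iso K (\<tau> X)) \<and>
            (\<forall>f \<in> cAr K. cComp K (\<tau> (cCod K f)) (cTenM K (cId K A) (cShiftM K f)) =
                          cComp K (cShiftM K (cTenM K (cId K A) f)) (\<tau> (cDom K f))) \<and>
            (\<forall>u v w. (u, v, w) \<in> cDist K \<longrightarrow>
               (cTenM K (cId K A) u, cTenM K (cId K A) v,
                cComp K (\<tau> (cDom K u)) (cTenM K (cId K A) w)) \<in> cDist K)) \<and>
       (\<exists>\<tau>. (\<forall>X \<in> cOb K. \<tau> X \<in> hom K (cTen K (cShift K X) A) (cShift K (cTen K X A)) \<and> is_iso K (\<tau> X)) \<and>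
            (\<forall>f \<in> cAr K. cComp K (\<tau> (cCod K f)) (cTenM K (cShiftM K f) (cId K A)) =
                          cComp K (cShiftM K (cTenM K f (cId K A))) (\<tau> (cDom K f))) \<and>
            (\<forall>u v w. (u, v, w) \<in> cDist K \<longrightarrow>
               (cTenM K u (cId K A), cTenM K v (cId K A),
                cComp K (\<tau> (cDom K u)) (cTenM K w (cId K A))) \<in> cDist K)))"

definition MDC :: "('o,'m) mdc \<Rightarrow> bool" where
  "MDC K \<longleftrightarrow> is_category K \<and> is_additive K \<and> shift_equivalence K \<and>
              is_triangulated K \<and> is_monoidal K \<and> tensor_exact K"

text \<open>Subcategories are full, hence identified with their sets of objects.\<close>

definition thick_ideal :: "('o,'m) mdc \<Rightarrow> 'o set \<Rightarrow> bool" where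
  "thick_ideal K I \<longleftrightarrow>
     I \<subseteq> cOb K \<and> cZobj K \<in> I \<and>
     (\<forall>X \<in> cOb K. cShift K X \<in> I \<longleftrightarrow> X \<in> I) \<and>
     (\<forall>u v w. (u, v, w) \<in> cDist K \<longrightarrow>
        (let X = cDom K u; Y = cDom K v; Z = cDom K w in
          (X \<in> I \<longrightarrow> Y \<in> I \<longrightarrow> Z \<in> I) \<and> (Y \<in> I \<longrightarrow> Z \<in> I \<longrightarrow> X \<in> I) \<and>
          (Z \<in> I \<longrightarrow> X \<in> I \<longrightarrow> Y \<in> I))) \<and>
     (\<forall>X \<in> cOb K. \<forall>X' \<in> cOb K. \<forall>Y \<in> I. isomorphic K Y (cSum K X X') \<longrightarrow> X \<in> I) \<and>
     (\<forall>A \<in> I. \<forall>B \<in> cOb K. cTen K A B \<in> I \<and> cTen K B A \<in> I)"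

definition gen_ideal :: "('o,'m) mdc \<Rightarrow> 'o set \<Rightarrow> 'o set" where
  "gen_ideal K S = \<Inter> {I. thick_ideal K I \<and> S \<subseteq> I}"

definition principal_ideal :: "('o,'m) mdc \<Rightarrow> 'o set \<Rightarrow> bool" where
  "principal_ideal K I \<longleftrightarrow> (\<exists>A \<in> cOb K. I = gen_ideal K {A})"

definition proper_ideal :: "('o,'m) mdc \<Rightarrow> 'o set \<Rightarrow> bool" where
  "proper_ideal K I \<longleftrightarrow> thick_ideal K I \<and> I \<noteq> cOb K"

definition coprime :: "('o,'m) mdc \<Rightarrow> 'o set \<Rightarrow> 'o set \<Rightarrow> bool" where
  "coprime K I J \<longleftrightarrow> gen_ideal K (I \<union> J) = cOb K"

definition maximal_ideal :: "('o,'m) mdc \<Rightarrow> 'o set \<Rightarrow> bool" where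
  "maximal_ideal K M \<longleftrightarrow> proper_ideal K M \<and>
     (\<forall>I. proper_ideal K I \<longrightarrow> M \<subseteq> I \<longrightarrow> I = M)"

definition prime_ideal :: "('o,'m) mdc \<Rightarrow> 'o set \<Rightarrow> bool" where
  "prime_ideal K P \<longleftrightarrow> proper_ideal K P \<and>
     (\<forall>I J. thick_ideal K I \<longrightarrow> thick_ideal K J \<longrightarrow>
        (\<forall>A \<in> I. \<forall>B \<in> J. cTen K A B \<in> P) \<longrightarrow> I \<subseteq> P \<or> J \<subseteq> P)"

definition Spc :: "('o,'m) mdc \<Rightarrow> 'o set set" where
  "Spc K = {P. prime_ideal K P}"

definition supp :: "('o,'m) mdc \<Rightarrow> 'o \<Rightarrow> 'o set set" where
  "supp K A = {P \<in> Spc K. A \<notin> P}"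

definition spc_closed :: "('o,'m) mdc \<Rightarrow> 'o set set \<Rightarrow> bool" where
  "spc_closed K Z \<longleftrightarrow> (\<exists>\<A> \<subseteq> cOb K. Z = Spc K \<inter> (\<Inter>A \<in> \<A>. supp K A))"

end

theory Submission
  imports Defs
begin

text \<open>Two thick ideals are coprime iff no prime contains both: every proper ideal lies in a
  maximal ideal (Zorn), and a maximal ideal M is prime because the ideal quotient
  {X. X \<otimes> J \<subseteq> M} is again a thick ideal, hence either everything or M itself.
  Coprimality is moreover witnessed by single objects A \<in> I, B \<in> J: thick ideals are closed
  under direct sums (the cone of a split inclusion X \<rightarrow> X \<oplus> Y is Y), so the ideals generated
  by such pairs form a directed family and the unit already lies in one of them. Coprime proper
  principal ideals generated by A and B give the decomposition Spc = supp A \<union> supp B into proper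
  closed subsets, and conversely the basic closed sets of a decomposition provide such A and B.\<close>

definition is_biproduct ::
  "('o,'m) mdc \<Rightarrow> 'o \<Rightarrow> 'o \<Rightarrow> 'o \<Rightarrow> 'm \<Rightarrow> 'm \<Rightarrow> 'm \<Rightarrow> 'm \<Rightarrow> bool" where
  "is_biproduct K X Y W i1 i2 p1 p2 \<longleftrightarrow>
     i1 \<in> hom K X W \<and> i2 \<in> hom K Y W \<and> p1 \<in> hom K W X \<and> p2 \<in> hom K W Y \<and>
     cComp K p1 i1 = cId K X \<and> cComp K p2 i2 = cId K Y \<and>
     cComp K p2 i1 = cZero K X Y \<and> cComp K p1 i2 = cZero K Y X \<and>
     cPlus K (cComp K i1 p1) (cComp K i2 p2) = cId K W"

definition two_of_three :: "'o set \<Rightarrow> 'o \<Rightarrow> 'o \<Rightarrow> 'o \<Rightarrow> bool" where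
  "two_of_three S X Y Z \<longleftrightarrow>
     (X \<in> S \<longrightarrow> Y \<in> S \<longrightarrow> Z \<in> S) \<and> (Y \<in> S \<longrightarrow> Z \<in> S \<longrightarrow> X \<in> S) \<and>
     (Z \<in> S \<longrightarrow> X \<in> S \<longrightarrow> Y \<in> S)"

definition thick_subcategory :: "('o,'m) mdc \<Rightarrow> 'o set \<Rightarrow> bool" where
  "thick_subcategory K S \<longleftrightarrow>
     S \<subseteq> cOb K \<and> cZobj K \<in> S \<and>
     (\<forall>X \<in> cOb K. cShift K X \<in> S \<longleftrightarrow> X \<in> S) \<and>
     (\<forall>u v w. (u, v, w) \<in> cDist K \<longrightarrow> two_of_three S (cDom K u) (cDom K v) (cDom K w)) \<and>
     (\<forall>X \<in> cOb K. \<forall>X' \<in> cOb K. \<forall>Y \<in> S. isomorphic K Y (cSum K X X') \<longrightarrow> X \<in> S)"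

lemma thick_ideal_iff_subcategory:
  "thick_ideal K I \<longleftrightarrow>
     thick_subcategory K I \<and> (\<forall>A \<in> I. \<forall>B \<in> cOb K. cTen K A B \<in> I \<and> cTen K B A \<in> I)"
  unfolding thick_ideal_def thick_subcategory_def two_of_three_def Let_def by blast

lemma Inter_mem_iff_cong: "(\<And>T. T \<in> F \<Longrightarrow> a \<in> T \<longleftrightarrow> b \<in> T) \<Longrightarrow> a \<in> \<Inter>F \<longleftrightarrow> b \<in> \<Inter>F"
  by auto

lemma Union_mem_iff_cong: "(\<And>T. T \<in> F \<Longrightarrow> a \<in> T \<longleftrightarrow> b \<in> T) \<Longrightarrow> a \<in> \<Union>F \<longleftrightarrow> b \<in> \<Union>F"
  by auto

lemma hom_arrow: "f \<in> hom K X Y \<Longrightarrow> f \<in> cAr K"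
  and hom_dom: "f \<in> hom K X Y \<Longrightarrow> cDom K f = X"
  and hom_cod: "f \<in> hom K X Y \<Longrightarrow> cCod K f = Y"
  by (simp_all add: hom_def)

locale monoidal_triangulated =
  fixes K :: "('o,'m) mdc"
  assumes MDC: "MDC K"
begin

lemma MDC_category: "is_category K"
  and MDC_additive: "is_additive K"
  and MDC_shift: "shift_equivalence K"
  and MDC_triangulated: "is_triangulated K"
  and MDC_monoidal: "is_monoidal K"
  and MDC_tensor_exact: "tensor_exact K"
  using MDC unfolding MDC_def by auto

subsection \<open>Additive categories\<close>

lemma hom_obj: "f \<in> hom K X Y \<Longrightarrow> X \<in> cOb K \<and> Y \<in> cOb K"
  using MDC_category unfolding is_category_def hom_def by auto

lemma id_in_hom [simp]: "X \<in> cOb K \<Longrightarrow> cId K X \<in> hom K X X"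
  using MDC_category unfolding is_category_def by auto

lemma comp_in_hom: "f \<in> hom K X Y \<Longrightarrow> g \<in> hom K Y Z \<Longrightarrow> cComp K g f \<in> hom K X Z"
  using MDC_category unfolding is_category_def hom_def by auto

lemma comp_id_left: "f \<in> hom K X Y \<Longrightarrow> cComp K (cId K Y) f = f"
  and comp_id_right: "f \<in> hom K X Y \<Longrightarrow> cComp K f (cId K X) = f"
  using MDC_category unfolding is_category_def hom_def by auto

lemma comp_assoc:
  "f \<in> hom K X Y \<Longrightarrow> g \<in> hom K Y Z \<Longrightarrow> h \<in> hom K Z W \<Longrightarrow>
   cComp K h (cComp K g f) = cComp K (cComp K h g) f"
  using MDC_category unfolding is_category_def hom_def by auto

lemma hom_abelian_group:
  "\<forall>X \<in> cOb K. \<forall>Y \<in> cOb K.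
     cZero K X Y \<in> hom K X Y \<and>
     (\<forall>f \<in> hom K X Y. \<forall>g \<in> hom K X Y. cPlus K f g \<in> hom K X Y) \<and>
     (\<forall>f \<in> hom K X Y. cNeg K f \<in> hom K X Y) \<and>
     (\<forall>f \<in> hom K X Y. \<forall>g \<in> hom K X Y. \<forall>h \<in> hom K X Y.
         cPlus K (cPlus K f g) h = cPlus K f (cPlus K g h)) \<and>
     (\<forall>f \<in> hom K X Y. \<forall>g \<in> hom K X Y. cPlus K f g = cPlus K g f) \<and>
     (\<forall>f \<in> hom K X Y. cPlus K f (cZero K X Y) = f) \<and>
     (\<forall>f \<in> hom K X Y. cPlus K f (cNeg K f) = cZero K X Y)"
  using MDC_additive unfolding is_additive_def by (elim conjE)

lemma zero_in_hom [simp]: "X \<in> cOb K \<Longrightarrow> Y \<in> cOb K \<Longrightarrow> cZero K X Y \<in> hom K X Y"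
  using hom_abelian_group by blast

lemma dom_id [simp]: "X \<in> cOb K \<Longrightarrow> cDom K (cId K X) = X"
  by (rule hom_dom[OF id_in_hom])

lemma cod_id [simp]: "X \<in> cOb K \<Longrightarrow> cCod K (cId K X) = X"
  by (rule hom_cod[OF id_in_hom])

lemma dom_zero [simp]: "X \<in> cOb K \<Longrightarrow> Y \<in> cOb K \<Longrightarrow> cDom K (cZero K X Y) = X"
  by (rule hom_dom[OF zero_in_hom])

lemma cod_zero [simp]: "X \<in> cOb K \<Longrightarrow> Y \<in> cOb K \<Longrightarrow> cCod K (cZero K X Y) = Y"
  by (rule hom_cod[OF zero_in_hom])

lemma plus_in_hom: "f \<in> hom K X Y \<Longrightarrow> g \<in> hom K X Y \<Longrightarrow> cPlus K f g \<in> hom K X Y"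
  and neg_in_hom: "f \<in> hom K X Y \<Longrightarrow> cNeg K f \<in> hom K X Y"
  and plus_assoc: "f \<in> hom K X Y \<Longrightarrow> g \<in> hom K X Y \<Longrightarrow> h \<in> hom K X Y \<Longrightarrow>
    cPlus K (cPlus K f g) h = cPlus K f (cPlus K g h)"
  and plus_commute: "f \<in> hom K X Y \<Longrightarrow> g \<in> hom K X Y \<Longrightarrow> cPlus K f g = cPlus K g f"
  and plus_zero: "f \<in> hom K X Y \<Longrightarrow> cPlus K f (cZero K X Y) = f"
  and plus_neg: "f \<in> hom K X Y \<Longrightarrow> cPlus K f (cNeg K f) = cZero K X Y"
  using hom_abelian_group hom_obj by blast+

lemma composition_bilinear:
  "\<forall>X \<in> cOb K. \<forall>Y \<in> cOb K. \<forall>Z \<in> cOb K.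
     \<forall>f \<in> hom K X Y. \<forall>f' \<in> hom K X Y. \<forall>g \<in> hom K Y Z. \<forall>g' \<in> hom K Y Z.
       cComp K g (cPlus K f f') = cPlus K (cComp K g f) (cComp K g f') \<and>
       cComp K (cPlus K g g') f = cPlus K (cComp K g f) (cComp K g' f)"
  using MDC_additive unfolding is_additive_def by (elim conjE)

lemma comp_plus_left:
  assumes f: "f \<in> hom K X Y" and f': "f' \<in> hom K X Y" and g: "g \<in> hom K Y Z"
  shows "cComp K g (cPlus K f f') = cPlus K (cComp K g f) (cComp K g f')"
  using composition_bilinear[rule_format, OF _ _ _ f f' g g] hom_obj[OF f] hom_obj[OF g] by blast

lemma comp_plus_right:
  assumes f: "f \<in> hom K X Y" and g: "g \<in> hom K Y Z" and g': "g' \<in> hom K Y Z"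
  shows "cComp K (cPlus K g g') f = cPlus K (cComp K g f) (cComp K g' f)"
  using composition_bilinear[rule_format, OF _ _ _ f f g g'] hom_obj[OF f] hom_obj[OF g] by blast

lemma zero_plus: "f \<in> hom K X Y \<Longrightarrow> cPlus K (cZero K X Y) f = f"
  using plus_commute[of "cZero K X Y" X Y f] plus_zero[of f X Y] hom_obj[of f X Y] by simp

lemma plus_self_imp_zero:
  assumes f: "f \<in> hom K X Y" and "cPlus K f f = f"
  shows "f = cZero K X Y"
proof -
  have "cZero K X Y = cPlus K (cPlus K f f) (cNeg K f)"
    using plus_neg f assms(2) by simp
  also have "\<dots> = cPlus K f (cPlus K f (cNeg K f))"
    using plus_assoc[OF f f neg_in_hom[OF f]] .
  also have "\<dots> = f" using plus_neg[OF f] plus_zero[OF f] by simp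
  finally show ?thesis by simp
qed

lemma plus_neg_zero_imp_eq:
  assumes f: "f \<in> hom K X Y" and g: "g \<in> hom K X Y" and "cPlus K f (cNeg K g) = cZero K X Y"
  shows "f = g"
proof -
  have "f = cPlus K f (cPlus K (cNeg K g) g)"
    using plus_commute[OF neg_in_hom[OF g] g] plus_neg[OF g] plus_zero[OF f] by simp
  also have "\<dots> = g"
    using plus_assoc[OF f neg_in_hom[OF g] g] assms(3) zero_plus g by simp
  finally show ?thesis .
qed

lemma comp_zero_right:
  assumes g: "g \<in> hom K Y Z" and X: "X \<in> cOb K"
  shows "cComp K g (cZero K X Y) = cZero K X Z"
proof -
  have z: "cZero K X Y \<in> hom K X Y" using X g hom_obj by simp
  have "cPlus K (cComp K g (cZero K X Y)) (cComp K g (cZero K X Y)) = cComp K g (cZero K X Y)"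
    using comp_plus_left[OF z z g] plus_zero[OF z] by simp
  then show ?thesis using plus_self_imp_zero comp_in_hom[OF z g] by blast
qed

lemma comp_zero_left:
  assumes f: "f \<in> hom K X Y" and Z: "Z \<in> cOb K"
  shows "cComp K (cZero K Y Z) f = cZero K X Z"
proof -
  have z: "cZero K Y Z \<in> hom K Y Z" using Z f hom_obj by simp
  have "cPlus K (cComp K (cZero K Y Z) f) (cComp K (cZero K Y Z) f) = cComp K (cZero K Y Z) f"
    using comp_plus_right[OF f z z] plus_zero[OF z] by simp
  then show ?thesis using plus_self_imp_zero comp_in_hom[OF f z] by blast
qed

lemma comp_neg_zero_imp_zero:
  assumes w: "w \<in> hom K X Y" and f: "f \<in> hom K Y Z"
    and "cComp K (cNeg K f) w = cZero K X Z"
  shows "cComp K f w = cZero K X Z"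
proof -
  have "cComp K f w = cPlus K (cComp K f w) (cComp K (cNeg K f) w)"
    using assms(3) plus_zero comp_in_hom[OF w f] by simp
  also have "\<dots> = cZero K X Z"
    using comp_plus_right[OF w f neg_in_hom[OF f]] plus_neg[OF f] comp_zero_left[OF w] hom_obj[OF f]
    by simp
  finally show ?thesis .
qed

lemma neg_zero: "X \<in> cOb K \<Longrightarrow> Y \<in> cOb K \<Longrightarrow> cNeg K (cZero K X Y) = cZero K X Y"
  using plus_neg[of "cZero K X Y" X Y] zero_plus[OF neg_in_hom, of "cZero K X Y" X Y] by simp

lemma zobj_obj [simp]: "cZobj K \<in> cOb K"
  using MDC_additive unfolding is_additive_def by auto

lemma hom_to_zobj:
  assumes "f \<in> hom K X (cZobj K)"
  shows "f = cZero K X (cZobj K)"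
proof -
  have "hom K X (cZobj K) = {cZero K X (cZobj K)}"
    using MDC_additive hom_obj[OF assms] unfolding is_additive_def by blast
  then show ?thesis using assms by blast
qed

lemma id_zobj: "cId K (cZobj K) = cZero K (cZobj K) (cZobj K)"
  using hom_to_zobj id_in_hom zobj_obj by blast

lemma comp_sum_of_comps:
  assumes f: "f \<in> hom K X Y" and a: "a \<in> hom K Y A" and b: "b \<in> hom K Y B"
    and g: "g \<in> hom K A Z" and h: "h \<in> hom K B Z"
  shows "cComp K (cPlus K (cComp K g a) (cComp K h b)) f
           = cPlus K (cComp K g (cComp K a f)) (cComp K h (cComp K b f))"
  using comp_plus_right[OF f comp_in_hom[OF a g] comp_in_hom[OF b h]]
    comp_assoc[OF f a g] comp_assoc[OF f b h] by simp

lemma sum_of_comps_comp: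
  assumes a: "a \<in> hom K X A" and b: "b \<in> hom K X B"
    and k: "k \<in> hom K A Y" and l: "l \<in> hom K B Y" and g: "g \<in> hom K Y Z"
  shows "cComp K g (cPlus K (cComp K k a) (cComp K l b))
           = cPlus K (cComp K (cComp K g k) a) (cComp K (cComp K g l) b)"
  using comp_plus_left[OF comp_in_hom[OF a k] comp_in_hom[OF b l] g]
    comp_assoc[OF a k g] comp_assoc[OF b l g] by simp

subsection \<open>Isomorphisms and biproducts\<close>

lemma is_isoI:
  assumes "f \<in> hom K X Y" "g \<in> hom K Y X" "cComp K g f = cId K X" "cComp K f g = cId K Y"
  shows "is_iso K f"
  using assms unfolding is_iso_def hom_def by auto

lemma isomorphicI:
  assumes "f \<in> hom K X Y" "g \<in> hom K Y X" "cComp K g f = cId K X" "cComp K f g = cId K Y"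
  shows "isomorphic K X Y"
  using assms is_isoI unfolding isomorphic_def by blast

lemma isomorphicE:
  assumes "isomorphic K X Y"
  obtains f g where "f \<in> hom K X Y" "g \<in> hom K Y X"
    "cComp K g f = cId K X" "cComp K f g = cId K Y"
  using assms unfolding isomorphic_def is_iso_def hom_def by auto

lemma is_iso_id: "X \<in> cOb K \<Longrightarrow> is_iso K (cId K X)"
  using is_isoI[OF id_in_hom id_in_hom] comp_id_left[OF id_in_hom] by blast

lemma isomorphic_sym: "isomorphic K X Y \<Longrightarrow> isomorphic K Y X"
  by (erule isomorphicE) (rule isomorphicI)

lemma isomorphic_trans:
  assumes "isomorphic K X Y" "isomorphic K Y Z"
  shows "isomorphic K X Z"
proof -
  obtain f g where f: "f \<in> hom K X Y" and g: "g \<in> hom K Y X"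
    and gf: "cComp K g f = cId K X" and fg: "cComp K f g = cId K Y"
    using assms(1) by (rule isomorphicE)
  obtain f' g' where f': "f' \<in> hom K Y Z" and g': "g' \<in> hom K Z Y"
    and gf': "cComp K g' f' = cId K Y" and fg': "cComp K f' g' = cId K Z"
    using assms(2) by (rule isomorphicE)
  have "cComp K (cComp K g g') (cComp K f' f) = cComp K g (cComp K (cComp K g' f') f)"
    using comp_assoc[OF comp_in_hom[OF f f'] g' g] comp_assoc[OF f f' g'] by simp
  also have "\<dots> = cId K X" using gf gf' comp_id_left f by simp
  finally have 1: "cComp K (cComp K g g') (cComp K f' f) = cId K X" .
  have "cComp K (cComp K f' f) (cComp K g g') = cComp K f' (cComp K (cComp K f g) g')"
    using comp_assoc[OF comp_in_hom[OF g' g] f f'] comp_assoc[OF g' g f] by simp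
  also have "\<dots> = cId K Z" using fg fg' comp_id_left g' by simp
  finally have 2: "cComp K (cComp K f' f) (cComp K g g') = cId K Z" .
  show ?thesis using isomorphicI[OF comp_in_hom[OF f f'] comp_in_hom[OF g' g] 1 2] .
qed

lemma sum_is_biproduct:
  assumes "X \<in> cOb K" "Y \<in> cOb K"
  shows "is_biproduct K X Y (cSum K X Y) (cIn1 K X Y) (cIn2 K X Y) (cPr1 K X Y) (cPr2 K X Y)"
  using MDC_additive assms unfolding is_additive_def is_biproduct_def by auto

lemma sum_obj: "X \<in> cOb K \<Longrightarrow> Y \<in> cOb K \<Longrightarrow> cSum K X Y \<in> cOb K"
  using MDC_additive unfolding is_additive_def by auto

lemma biproductD:
  assumes "is_biproduct K X Y W i1 i2 p1 p2"
  shows "i1 \<in> hom K X W" "i2 \<in> hom K Y W" "p1 \<in> hom K W X" "p2 \<in> hom K W Y"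
    "cComp K p1 i1 = cId K X" "cComp K p2 i2 = cId K Y"
    "cComp K p2 i1 = cZero K X Y" "cComp K p1 i2 = cZero K Y X"
    "cPlus K (cComp K i1 p1) (cComp K i2 p2) = cId K W"
  using assms unfolding is_biproduct_def by auto

lemma biproduct_comparison_inverse:
  assumes W: "is_biproduct K X Y W i1 i2 p1 p2" and W': "is_biproduct K X Y W' j1 j2 q1 q2"
  shows "cComp K (cPlus K (cComp K i1 q1) (cComp K i2 q2)) (cPlus K (cComp K j1 p1) (cComp K j2 p2))
           = cId K W"
proof -
  note i = biproductD[OF W] and j = biproductD[OF W']
  have X: "X \<in> cOb K" and Y: "Y \<in> cOb K" using hom_obj[OF i(1)] hom_obj[OF i(2)] by auto
  let ?\<psi> = "cPlus K (cComp K i1 q1) (cComp K i2 q2)"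
  have "cComp K ?\<psi> j1 = cPlus K (cComp K i1 (cComp K q1 j1)) (cComp K i2 (cComp K q2 j1))"
    using comp_sum_of_comps[OF j(1) j(3) j(4) i(1) i(2)] .
  also have "\<dots> = i1" using j(5,7) comp_id_right[OF i(1)] comp_zero_right[OF i(2) X] plus_zero[OF i(1)]
    by simp
  finally have 1: "cComp K ?\<psi> j1 = i1" .
  have "cComp K ?\<psi> j2 = cPlus K (cComp K i1 (cComp K q1 j2)) (cComp K i2 (cComp K q2 j2))"
    using comp_sum_of_comps[OF j(2) j(3) j(4) i(1) i(2)] .
  also have "\<dots> = i2" using j(6,8) comp_id_right[OF i(2)] comp_zero_right[OF i(1) Y] zero_plus[OF i(2)]
    by simp
  finally have 2: "cComp K ?\<psi> j2 = i2" .
  have "?\<psi> \<in> hom K W' W" using plus_in_hom[OF comp_in_hom comp_in_hom] i(1,2) j(3,4) by blast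
  then have "cComp K ?\<psi> (cPlus K (cComp K j1 p1) (cComp K j2 p2))
               = cPlus K (cComp K (cComp K ?\<psi> j1) p1) (cComp K (cComp K ?\<psi> j2) p2)"
    using sum_of_comps_comp[OF i(3) i(4) j(1) j(2)] by blast
  then show ?thesis using 1 2 i(9) by simp
qed

lemma biproduct_isomorphic:
  assumes "is_biproduct K X Y W i1 i2 p1 p2" "is_biproduct K X Y W' j1 j2 q1 q2"
  shows "isomorphic K W W'"
proof (rule isomorphicI)
  show "cPlus K (cComp K j1 p1) (cComp K j2 p2) \<in> hom K W W'"
    and "cPlus K (cComp K i1 q1) (cComp K i2 q2) \<in> hom K W' W"
    using plus_in_hom[OF comp_in_hom comp_in_hom] biproductD[OF assms(1)] biproductD[OF assms(2)]
    by blast+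
  show "cComp K (cPlus K (cComp K i1 q1) (cComp K i2 q2)) (cPlus K (cComp K j1 p1) (cComp K j2 p2))
          = cId K W"
    using biproduct_comparison_inverse[OF assms] .
  show "cComp K (cPlus K (cComp K j1 p1) (cComp K j2 p2)) (cPlus K (cComp K i1 q1) (cComp K i2 q2))
          = cId K W'"
    using biproduct_comparison_inverse[OF assms(2,1)] .
qed

lemma isomorphic_sum_zobj:
  assumes X: "X \<in> cOb K"
  shows "isomorphic K X (cSum K X (cZobj K))"
proof -
  have "is_biproduct K X (cZobj K) X (cId K X) (cZero K (cZobj K) X) (cId K X) (cZero K X (cZobj K))"
    unfolding is_biproduct_def
  proof (intro conjI)
    have "cComp K (cZero K X (cZobj K)) (cZero K (cZobj K) X) \<in> hom K (cZobj K) (cZobj K)"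
      using X comp_in_hom[OF zero_in_hom zero_in_hom] by simp
    then show "cComp K (cZero K X (cZobj K)) (cZero K (cZobj K) X) = cId K (cZobj K)"
      using hom_to_zobj id_zobj by simp
    show "cPlus K (cComp K (cId K X) (cId K X)) (cComp K (cZero K (cZobj K) X) (cZero K X (cZobj K)))
            = cId K X"
      using X comp_zero_left[OF zero_in_hom[OF X zobj_obj] X] comp_id_left[OF id_in_hom[OF X]]
        plus_zero[OF id_in_hom[OF X]] by simp
  qed (use X comp_id_left[OF id_in_hom[OF X]] comp_id_right[OF zero_in_hom[OF X zobj_obj]]
          comp_id_left[OF zero_in_hom[OF zobj_obj X]] in simp_all)
  then show ?thesis using biproduct_isomorphic sum_is_biproduct X zobj_obj by blast
qed

lemma isomorphic_sum_swap:
  assumes "X \<in> cOb K" "Y \<in> cOb K"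
  shows "isomorphic K (cSum K X Y) (cSum K Y X)"
proof -
  have "is_biproduct K Y X (cSum K X Y) (cIn2 K X Y) (cIn1 K X Y) (cPr2 K X Y) (cPr1 K X Y)"
    using sum_is_biproduct[OF assms] plus_commute[OF comp_in_hom comp_in_hom]
    unfolding is_biproduct_def by auto
  then show ?thesis using biproduct_isomorphic sum_is_biproduct assms by blast
qed

subsection \<open>Triangles\<close>

lemma shift_obj [simp]: "X \<in> cOb K \<Longrightarrow> cShift K X \<in> cOb K"
  using MDC_shift unfolding shift_equivalence_def by blast

lemma shift_in_hom: "f \<in> hom K X Y \<Longrightarrow> cShiftM K f \<in> hom K (cShift K X) (cShift K Y)"
  using MDC_shift unfolding shift_equivalence_def hom_def by auto

lemma shift_id: "X \<in> cOb K \<Longrightarrow> cShiftM K (cId K X) = cId K (cShift K X)"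
  using MDC_shift unfolding shift_equivalence_def by blast

lemma shift_comp:
  "f \<in> hom K X Y \<Longrightarrow> g \<in> hom K Y Z \<Longrightarrow>
   cShiftM K (cComp K g f) = cComp K (cShiftM K g) (cShiftM K f)"
  using MDC_shift unfolding shift_equivalence_def hom_def by auto

lemma shift_plus:
  assumes f: "f \<in> hom K X Y" and g: "g \<in> hom K X Y"
  shows "cShiftM K (cPlus K f g) = cPlus K (cShiftM K f) (cShiftM K g)"
proof -
  have "\<forall>X \<in> cOb K. \<forall>Y \<in> cOb K. \<forall>f \<in> hom K X Y. \<forall>g \<in> hom K X Y.
          cShiftM K (cPlus K f g) = cPlus K (cShiftM K f) (cShiftM K g)"
    using MDC_shift unfolding shift_equivalence_def by (elim conjE)
  then show ?thesis using f g hom_obj[OF f] by blast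
qed

lemma shift_zero:
  assumes X: "X \<in> cOb K" and Y: "Y \<in> cOb K"
  shows "cShiftM K (cZero K X Y) = cZero K (cShift K X) (cShift K Y)"
proof -
  have z: "cZero K X Y \<in> hom K X Y" using X Y by simp
  have "cPlus K (cShiftM K (cZero K X Y)) (cShiftM K (cZero K X Y)) = cShiftM K (cZero K X Y)"
    using shift_plus[OF z z] plus_zero[OF z] by simp
  then show ?thesis using plus_self_imp_zero shift_in_hom[OF z] by blast
qed

lemma dist_is_triangle: "T \<in> cDist K \<Longrightarrow> is_triangle K T"
proof -
  have "\<forall>T \<in> cDist K. is_triangle K T"
    using MDC_triangulated unfolding is_triangulated_def by (elim conjE)
  then show "T \<in> cDist K \<Longrightarrow> ?thesis" by blast
qed

lemma dist_closed_iso: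
  assumes "T \<in> cDist K" "is_triangle K T'" "tri_morph K T T' a b c"
    "is_iso K a" "is_iso K b" "is_iso K c"
  shows "T' \<in> cDist K"
proof -
  have "\<forall>T \<in> cDist K. \<forall>T'. is_triangle K T' \<and>
          (\<exists>a b c. tri_morph K T T' a b c \<and> is_iso K a \<and> is_iso K b \<and> is_iso K c) \<longrightarrow> T' \<in> cDist K"
    using MDC_triangulated unfolding is_triangulated_def by (elim conjE)
  then show ?thesis using assms by blast
qed

lemma dist_id: "X \<in> cOb K \<Longrightarrow> (cId K X, cZero K X (cZobj K), cZero K (cZobj K) (cShift K X)) \<in> cDist K"
proof -
  have "\<forall>X \<in> cOb K. (cId K X, cZero K X (cZobj K), cZero K (cZobj K) (cShift K X)) \<in> cDist K"
    using MDC_triangulated unfolding is_triangulated_def by (elim conjE)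
  then show "X \<in> cOb K \<Longrightarrow> ?thesis" by blast
qed

lemma dist_exists: "u \<in> cAr K \<Longrightarrow> \<exists>v w. (u, v, w) \<in> cDist K"
proof -
  have "\<forall>u \<in> cAr K. \<exists>v w. (u, v, w) \<in> cDist K"
    using MDC_triangulated unfolding is_triangulated_def by (elim conjE)
  then show "u \<in> cAr K \<Longrightarrow> ?thesis" by blast
qed

lemma dist_rotate_iff:
  "is_triangle K (u, v, w) \<Longrightarrow> (u, v, w) \<in> cDist K \<longleftrightarrow> (v, w, cNeg K (cShiftM K u)) \<in> cDist K"
proof -
  have "\<forall>u v w. is_triangle K (u, v, w) \<longrightarrow>
          ((u, v, w) \<in> cDist K \<longleftrightarrow> (v, w, cNeg K (cShiftM K u)) \<in> cDist K)"
    using MDC_triangulated unfolding is_triangulated_def by (elim conjE)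
  then show "is_triangle K (u, v, w) \<Longrightarrow> ?thesis" by blast
qed

lemma dist_rotate: "(u, v, w) \<in> cDist K \<Longrightarrow> (v, w, cNeg K (cShiftM K u)) \<in> cDist K"
  using dist_rotate_iff dist_is_triangle by blast

lemma dist_morphism:
  assumes "(u, v, w) \<in> cDist K" "(u', v', w') \<in> cDist K"
    "a \<in> hom K (cDom K u) (cDom K u')" "b \<in> hom K (cDom K v) (cDom K v')"
    "cComp K u' a = cComp K b u"
  obtains c where "tri_morph K (u, v, w) (u', v', w') a b c"
proof -
  have "\<forall>u v w u' v' w' a b. (u, v, w) \<in> cDist K \<longrightarrow> (u', v', w') \<in> cDist K \<longrightarrow>
          a \<in> hom K (cDom K u) (cDom K u') \<longrightarrow> b \<in> hom K (cDom K v) (cDom K v') \<longrightarrow>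
          cComp K u' a = cComp K b u \<longrightarrow> (\<exists>c. tri_morph K (u, v, w) (u', v', w') a b c)"
    using MDC_triangulated unfolding is_triangulated_def by (elim conjE)
  then show ?thesis using assms that by blast
qed

lemma dist_in_hom:
  assumes "(u, v, w) \<in> cDist K"
  shows "u \<in> hom K (cDom K u) (cDom K v)" "v \<in> hom K (cDom K v) (cDom K w)"
    "w \<in> hom K (cDom K w) (cShift K (cDom K u))"
  using dist_is_triangle[OF assms] unfolding is_triangle_def hom_def by auto

lemma dist_comp_zero:
  assumes d: "(u, v, w) \<in> cDist K"
  shows "cComp K v u = cZero K (cDom K u) (cDom K w)"
proof -
  let ?X = "cDom K u"
  have u: "u \<in> hom K ?X (cDom K v)" using dist_in_hom[OF d] by blast
  have X: "?X \<in> cOb K" using hom_obj[OF u] by blast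
  obtain c where
    "tri_morph K (cId K ?X, cZero K ?X (cZobj K), cZero K (cZobj K) (cShift K ?X)) (u, v, w) (cId K ?X) u c"
    using dist_morphism[OF dist_id[OF X] d, of "cId K ?X" u] X u comp_id_right[OF u] by auto
  then have "c \<in> hom K (cZobj K) (cDom K w)" "cComp K v u = cComp K c (cZero K ?X (cZobj K))"
    unfolding tri_morph_def using X by auto
  then show ?thesis using comp_zero_right X by simp
qed

lemma dist_shift_comp_zero:
  assumes d: "(u, v, w) \<in> cDist K"
  shows "cComp K (cShiftM K u) w = cZero K (cDom K w) (cShift K (cDom K v))"
proof -
  have u: "u \<in> hom K (cDom K u) (cDom K v)" and v: "v \<in> hom K (cDom K v) (cDom K w)"
    and w: "w \<in> hom K (cDom K w) (cShift K (cDom K u))"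
    using dist_in_hom[OF d] by blast+
  have d2: "(w, cNeg K (cShiftM K u), cNeg K (cShiftM K v)) \<in> cDist K"
    using dist_rotate[OF dist_rotate[OF d]] .
  have "cDom K (cNeg K (cShiftM K v)) = cShift K (cDom K v)"
    using hom_dom[OF neg_in_hom[OF shift_in_hom[OF v]]] .
  then have "cComp K (cNeg K (cShiftM K u)) w = cZero K (cDom K w) (cShift K (cDom K v))"
    using dist_comp_zero[OF d2] by simp
  then show ?thesis using comp_neg_zero_imp_zero[OF w shift_in_hom[OF u]] by blast
qed

lemma is_iso_zobj_shift_zobj: "is_iso K (cZero K (cZobj K) (cShift K (cZobj K)))"
proof (rule is_isoI)
  let ?Z = "cZobj K" and ?S = "cShift K (cZobj K)"
  show "cZero K ?Z ?S \<in> hom K ?Z ?S" and "cZero K ?S ?Z \<in> hom K ?S ?Z" by simp_all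
  show "cComp K (cZero K ?S ?Z) (cZero K ?Z ?S) = cId K ?Z"
    using comp_zero_right[of "cZero K ?S ?Z" ?S ?Z ?Z] id_zobj by simp
  have "cComp K (cZero K ?Z ?S) (cZero K ?S ?Z) = cShiftM K (cZero K ?Z ?Z)"
    using comp_zero_right[of "cZero K ?Z ?S" ?Z ?S ?S] shift_zero by simp
  then show "cComp K (cZero K ?Z ?S) (cZero K ?S ?Z) = cId K ?S"
    using id_zobj shift_id[OF zobj_obj] by simp
qed

lemma dist_id_shift_zobj:
  assumes W: "W \<in> cOb K"
  shows "(cId K W, cZero K W (cShift K (cZobj K)), cZero K (cShift K (cZobj K)) (cShift K W)) \<in> cDist K"
proof (rule dist_closed_iso[OF dist_id[OF W]])
  let ?Z = "cZobj K" and ?S = "cShift K (cZobj K)"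
  show "is_triangle K (cId K W, cZero K W ?S, cZero K ?S (cShift K W))"
    unfolding is_triangle_def using W by (simp add: hom_arrow[OF id_in_hom] hom_arrow[OF zero_in_hom])
  show "tri_morph K (cId K W, cZero K W ?Z, cZero K ?Z (cShift K W))
          (cId K W, cZero K W ?S, cZero K ?S (cShift K W)) (cId K W) (cId K W) (cZero K ?Z ?S)"
    unfolding tri_morph_def
    using W comp_id_left[OF id_in_hom[OF W]] comp_id_right[of "cZero K W ?S" W ?S]
      comp_zero_right[of "cZero K ?Z ?S" ?Z ?S W] comp_zero_right[of "cZero K ?S (cShift K W)" ?S _ ?Z]
      comp_id_left[of "cZero K ?Z (cShift K W)" ?Z "cShift K W"] shift_id[OF W]
    by simp
qed (use W is_iso_id is_iso_zobj_shift_zobj in simp_all)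

lemma dist_zero_id:
  assumes W: "W \<in> cOb K"
  shows "(cZero K (cZobj K) W, cId K W, cZero K W (cShift K (cZobj K))) \<in> cDist K"
proof -
  let ?Z = "cZobj K"
  have "is_triangle K (cZero K ?Z W, cId K W, cZero K W (cShift K ?Z))"
    unfolding is_triangle_def using W by (simp add: hom_arrow[OF id_in_hom] hom_arrow[OF zero_in_hom])
  moreover have "cNeg K (cShiftM K (cZero K ?Z W)) = cZero K (cShift K ?Z) (cShift K W)"
    using shift_zero neg_zero W by simp
  ultimately show ?thesis using dist_rotate_iff dist_id_shift_zobj[OF W] by simp
qed

lemma dist_weak_cokernel:
  assumes d: "(u, v, w) \<in> cDist K" and g: "g \<in> hom K (cDom K v) W"
    and gu: "cComp K g u = cZero K (cDom K u) W"
  obtains h where "h \<in> hom K (cDom K w) W" "cComp K h v = g"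
proof -
  let ?Z = "cZobj K"
  have W: "W \<in> cOb K" using hom_obj[OF g] by blast
  have X: "cDom K u \<in> cOb K" using hom_obj[OF dist_in_hom(1)[OF d]] by blast
  have a: "cZero K (cDom K u) ?Z \<in> hom K (cDom K u) (cDom K (cZero K ?Z W))" using X W by simp
  have b: "g \<in> hom K (cDom K v) (cDom K (cId K W))" using g W by simp
  have "cComp K (cZero K ?Z W) (cZero K (cDom K u) ?Z) = cComp K g u"
    using gu comp_zero_right[of "cZero K ?Z W" ?Z W "cDom K u"] W X by simp
  then obtain c where
    "tri_morph K (u, v, w) (cZero K ?Z W, cId K W, cZero K W (cShift K ?Z)) (cZero K (cDom K u) ?Z) g c"
    using dist_morphism[OF d dist_zero_id[OF W] a b] by blast
  then have "c \<in> hom K (cDom K w) W" "cComp K c v = g"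
    unfolding tri_morph_def using W comp_id_left[OF g] by auto
  then show ?thesis using that by blast
qed

lemma dist_third_zero_if_first_split:
  assumes d: "(u, v, w) \<in> cDist K" and r: "r \<in> hom K (cDom K v) (cDom K u)"
    and ru: "cComp K r u = cId K (cDom K u)"
  shows "w = cZero K (cDom K w) (cShift K (cDom K u))"
proof -
  have u: "u \<in> hom K (cDom K u) (cDom K v)" and w: "w \<in> hom K (cDom K w) (cShift K (cDom K u))"
    using dist_in_hom[OF d] by blast+
  have "w = cComp K (cShiftM K (cComp K r u)) w"
    using ru shift_id comp_id_left[OF w] hom_obj[OF u] by simp
  also have "\<dots> = cComp K (cShiftM K r) (cComp K (cShiftM K u) w)"
    using shift_comp[OF u r] comp_assoc[OF w shift_in_hom[OF u] shift_in_hom[OF r]] by simp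
  also have "\<dots> = cZero K (cDom K w) (cShift K (cDom K u))"
    using dist_shift_comp_zero[OF d] comp_zero_right[OF shift_in_hom[OF r]] hom_obj[OF w] by simp
  finally show ?thesis .
qed

lemma dist_second_epi_if_third_zero:
  assumes d: "(u, v, w) \<in> cDist K" and w0: "w = cZero K (cDom K w) (cShift K (cDom K u))"
    and a: "a \<in> hom K (cDom K w) W" and b: "b \<in> hom K (cDom K w) W"
    and av: "cComp K a v = cComp K b v"
  shows "a = b"
proof -
  have v: "v \<in> hom K (cDom K v) (cDom K w)" using dist_in_hom[OF d] by blast
  let ?e = "cPlus K a (cNeg K b)"
  have e: "?e \<in> hom K (cDom K w) W" using plus_in_hom[OF a neg_in_hom[OF b]] .
  have "cComp K ?e v = cComp K (cPlus K b (cNeg K b)) v"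
    using comp_plus_right[OF v a neg_in_hom[OF b]] comp_plus_right[OF v b neg_in_hom[OF b]] av by simp
  also have "\<dots> = cZero K (cDom K v) W"
    using plus_neg[OF b] comp_zero_left[OF v] hom_obj[OF a] by simp
  finally have "cComp K ?e v = cZero K (cDom K v) W" .
  then obtain h where h: "h \<in> hom K (cShift K (cDom K u)) W" "cComp K h w = ?e"
    using dist_weak_cokernel[OF dist_rotate[OF d] e]
      hom_dom[OF neg_in_hom[OF shift_in_hom[OF dist_in_hom(1)[OF d]]]] by metis
  then have "?e = cZero K (cDom K w) W"
    using w0 comp_zero_right hom_obj[OF a] by metis
  then show ?thesis using plus_neg_zero_imp_eq[OF a b] by blast
qed

text \<open>The third map of the triangle vanishes because the inclusion splits, which makes the second
  map an epimorphism.\<close>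

lemma cone_of_sum_inclusion:
  assumes d: "(cIn1 K X Y, v, w) \<in> cDist K" and X: "X \<in> cOb K" and Y: "Y \<in> cOb K"
  shows "isomorphic K Y (cDom K w)"
proof -
  let ?S = "cSum K X Y" and ?C = "cDom K w"
  note s = biproductD[OF sum_is_biproduct[OF X Y]]
  have dv: "cDom K v = ?S" using dist_in_hom(1)[OF d] hom_cod[OF s(1)] hom_cod by metis
  have du: "cDom K (cIn1 K X Y) = X" using hom_dom[OF s(1)] .
  have v: "v \<in> hom K ?S ?C" using dist_in_hom(2)[OF d] dv by simp
  have C: "?C \<in> cOb K" using hom_obj[OF v] by blast
  have w0: "w = cZero K ?C (cShift K X)"
    using dist_third_zero_if_first_split[OF d] s(3,5) dv du by simp
  obtain \<psi> where \<psi>: "\<psi> \<in> hom K ?C Y" "cComp K \<psi> v = cPr2 K X Y"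
    using dist_weak_cokernel[OF d, of "cPr2 K X Y" Y] s(4,7) dv du by auto
  let ?\<phi> = "cComp K v (cIn2 K X Y)"
  have \<phi>: "?\<phi> \<in> hom K Y ?C" using comp_in_hom[OF s(2) v] .
  have "cComp K \<psi> ?\<phi> = cId K Y" using comp_assoc[OF s(2) v \<psi>(1)] \<psi>(2) s(6) by simp
  moreover have "cComp K (cComp K ?\<phi> \<psi>) v = cComp K (cId K ?C) v"
  proof -
    have "cComp K v (cIn1 K X Y) = cZero K X ?C" using dist_comp_zero[OF d] du by simp
    then have "v = cComp K ?\<phi> (cPr2 K X Y)"
      using sum_of_comps_comp[OF s(3) s(4) s(1) s(2) v] s(9) comp_id_right[OF v]
        comp_zero_left[OF s(3) C] zero_plus[OF comp_in_hom[OF s(4) \<phi>]] by simp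
    then show ?thesis
      using comp_assoc[OF v \<psi>(1) \<phi>] \<psi>(2) comp_id_left[OF v] by simp
  qed
  then have "cComp K ?\<phi> \<psi> = cId K ?C"
    using dist_second_epi_if_third_zero[OF d] w0 du comp_in_hom[OF \<psi>(1) \<phi>] C by simp
  ultimately show ?thesis using isomorphicI[OF \<phi> \<psi>(1)] by blast
qed

subsection \<open>The tensor product\<close>

lemma tensor_obj [simp]: "A \<in> cOb K \<Longrightarrow> B \<in> cOb K \<Longrightarrow> cTen K A B \<in> cOb K"
proof -
  have "\<forall>A \<in> cOb K. \<forall>B \<in> cOb K. cTen K A B \<in> cOb K"
    using MDC_monoidal unfolding is_monoidal_def by (elim conjE)
  then show "A \<in> cOb K \<Longrightarrow> B \<in> cOb K \<Longrightarrow> ?thesis" by blast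
qed

lemma unit_obj [simp]: "cUnit K \<in> cOb K"
  using MDC_monoidal unfolding is_monoidal_def by blast

lemma tensor_in_hom:
  assumes f: "f \<in> hom K A B" and g: "g \<in> hom K C D"
  shows "cTenM K f g \<in> hom K (cTen K A C) (cTen K B D)"
proof -
  have "\<forall>f \<in> cAr K. \<forall>g \<in> cAr K.
          cTenM K f g \<in> hom K (cTen K (cDom K f) (cDom K g)) (cTen K (cCod K f) (cCod K g))"
    using MDC_monoidal unfolding is_monoidal_def by (elim conjE)
  then show ?thesis using f g unfolding hom_def by auto
qed

lemma tensor_id: "A \<in> cOb K \<Longrightarrow> B \<in> cOb K \<Longrightarrow> cTenM K (cId K A) (cId K B) = cId K (cTen K A B)"
  using MDC_monoidal unfolding is_monoidal_def by blast

lemma tensor_comp: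
  assumes "f \<in> hom K A B" "f' \<in> hom K B B'" "g \<in> hom K C D" "g' \<in> hom K D D'"
  shows "cTenM K (cComp K f' f) (cComp K g' g) = cComp K (cTenM K f' g') (cTenM K f g)"
proof -
  have "\<forall>f \<in> cAr K. \<forall>f' \<in> cAr K. \<forall>g \<in> cAr K. \<forall>g' \<in> cAr K.
          cCod K f = cDom K f' \<longrightarrow> cCod K g = cDom K g' \<longrightarrow>
          cTenM K (cComp K f' f) (cComp K g' g) = cComp K (cTenM K f' g') (cTenM K f g)"
    using MDC_monoidal unfolding is_monoidal_def by (elim conjE)
  then show ?thesis using assms unfolding hom_def by auto
qed

lemma tensor_assoc_isomorphic:
  assumes "A \<in> cOb K" "B \<in> cOb K" "C \<in> cOb K"
  shows "isomorphic K (cTen K (cTen K A B) C) (cTen K A (cTen K B C))"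
proof -
  have "\<forall>A \<in> cOb K. \<forall>B \<in> cOb K. \<forall>C \<in> cOb K.
          cAssoc K A B C \<in> hom K (cTen K (cTen K A B) C) (cTen K A (cTen K B C)) \<and>
          is_iso K (cAssoc K A B C)"
    using MDC_monoidal unfolding is_monoidal_def by (elim conjE)
  then show ?thesis using assms unfolding isomorphic_def by blast
qed

lemma unit_tensor_isomorphic: "B \<in> cOb K \<Longrightarrow> isomorphic K (cTen K (cUnit K) B) B"
proof -
  have "\<forall>A \<in> cOb K. cLunit K A \<in> hom K (cTen K (cUnit K) A) A \<and> is_iso K (cLunit K A) \<and>
          cRunit K A \<in> hom K (cTen K A (cUnit K)) A \<and> is_iso K (cRunit K A)"
    using MDC_monoidal unfolding is_monoidal_def by (elim conjE)
  then show "B \<in> cOb K \<Longrightarrow> ?thesis" unfolding isomorphic_def by blast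
qed

lemma tensor_right_exact:
  assumes B: "B \<in> cOb K"
  shows "\<forall>X \<in> cOb K. \<forall>Y \<in> cOb K. \<forall>f \<in> hom K X Y. \<forall>g \<in> hom K X Y.
           cTenM K (cPlus K f g) (cId K B) = cPlus K (cTenM K f (cId K B)) (cTenM K g (cId K B))"
    and "\<exists>\<tau>. (\<forall>X \<in> cOb K. \<tau> X \<in> hom K (cTen K (cShift K X) B) (cShift K (cTen K X B)) \<and>
                           is_iso K (\<tau> X)) \<and>
             (\<forall>u v w. (u, v, w) \<in> cDist K \<longrightarrow>
                (cTenM K u (cId K B), cTenM K v (cId K B),
                 cComp K (\<tau> (cDom K u)) (cTenM K w (cId K B))) \<in> cDist K)"
  using MDC_tensor_exact B unfolding tensor_exact_def by blast+

lemma tensor_right_plus: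
  "B \<in> cOb K \<Longrightarrow> f \<in> hom K X Y \<Longrightarrow> g \<in> hom K X Y \<Longrightarrow>
   cTenM K (cPlus K f g) (cId K B) = cPlus K (cTenM K f (cId K B)) (cTenM K g (cId K B))"
  using tensor_right_exact(1) hom_obj by blast

lemma shift_tensor_isomorphic:
  "X \<in> cOb K \<Longrightarrow> B \<in> cOb K \<Longrightarrow> isomorphic K (cTen K (cShift K X) B) (cShift K (cTen K X B))"
  using tensor_right_exact(2) unfolding isomorphic_def by blast

lemma dist_tensor_right:
  "(u, v, w) \<in> cDist K \<Longrightarrow> B \<in> cOb K \<Longrightarrow> \<exists>w'. (cTenM K u (cId K B), cTenM K v (cId K B), w') \<in> cDist K"
  using tensor_right_exact(2) by blast

lemma tensor_right_zero:
  assumes X: "X \<in> cOb K" and Y: "Y \<in> cOb K" and B: "B \<in> cOb K"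
  shows "cTenM K (cZero K X Y) (cId K B) = cZero K (cTen K X B) (cTen K Y B)"
proof -
  have z: "cZero K X Y \<in> hom K X Y" using X Y by simp
  have "cPlus K (cTenM K (cZero K X Y) (cId K B)) (cTenM K (cZero K X Y) (cId K B))
          = cTenM K (cZero K X Y) (cId K B)"
    using tensor_right_plus[OF B z z] plus_zero[OF z] by simp
  then show ?thesis using plus_self_imp_zero tensor_in_hom[OF z id_in_hom[OF B]] by blast
qed

lemma zobj_tensor_isomorphic:
  assumes B: "B \<in> cOb K"
  shows "isomorphic K (cTen K (cZobj K) B) (cZobj K)"
proof (rule isomorphicI)
  let ?T = "cTen K (cZobj K) B"
  have "cId K ?T = cZero K ?T ?T"
    using tensor_id[OF zobj_obj B] id_zobj tensor_right_zero[OF zobj_obj zobj_obj B] by simp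
  then show "cComp K (cZero K (cZobj K) ?T) (cZero K ?T (cZobj K)) = cId K ?T"
    using comp_zero_right[of "cZero K (cZobj K) ?T" "cZobj K" ?T ?T] B by simp
  show "cComp K (cZero K ?T (cZobj K)) (cZero K (cZobj K) ?T) = cId K (cZobj K)"
    using comp_zero_right[of "cZero K ?T (cZobj K)" ?T "cZobj K" "cZobj K"] B id_zobj by simp
qed (use B in simp_all)

lemma tensor_right_isomorphic:
  assumes "isomorphic K Y Y'" and B: "B \<in> cOb K"
  shows "isomorphic K (cTen K Y B) (cTen K Y' B)"
proof -
  obtain f g where f: "f \<in> hom K Y Y'" and g: "g \<in> hom K Y' Y"
    and gf: "cComp K g f = cId K Y" and fg: "cComp K f g = cId K Y'"
    using assms(1) by (rule isomorphicE)
  have iB: "cId K B \<in> hom K B B" using B by simp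
  have Y: "Y \<in> cOb K" "Y' \<in> cOb K" using hom_obj[OF f] by auto
  show ?thesis
  proof (rule isomorphicI[OF tensor_in_hom[OF f iB] tensor_in_hom[OF g iB]])
    show "cComp K (cTenM K g (cId K B)) (cTenM K f (cId K B)) = cId K (cTen K Y B)"
      using tensor_comp[OF f g iB iB] gf comp_id_left[OF iB] tensor_id[OF Y(1) B] by simp
    show "cComp K (cTenM K f (cId K B)) (cTenM K g (cId K B)) = cId K (cTen K Y' B)"
      using tensor_comp[OF g f iB iB] fg comp_id_left[OF iB] tensor_id[OF Y(2) B] by simp
  qed
qed

lemma biproduct_tensor_right:
  assumes W: "is_biproduct K X Y W i1 i2 p1 p2" and B: "B \<in> cOb K"
  shows "is_biproduct K (cTen K X B) (cTen K Y B) (cTen K W B) (cTenM K i1 (cId K B))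
           (cTenM K i2 (cId K B)) (cTenM K p1 (cId K B)) (cTenM K p2 (cId K B))"
proof -
  note b = biproductD[OF W]
  have iB: "cId K B \<in> hom K B B" and cB: "cComp K (cId K B) (cId K B) = cId K B"
    using B comp_id_left[OF id_in_hom[OF B]] by simp_all
  have ob: "X \<in> cOb K" "Y \<in> cOb K" "W \<in> cOb K" using hom_obj[OF b(1)] hom_obj[OF b(2)] by auto
  have "cPlus K (cComp K (cTenM K i1 (cId K B)) (cTenM K p1 (cId K B)))
                (cComp K (cTenM K i2 (cId K B)) (cTenM K p2 (cId K B)))
          = cTenM K (cPlus K (cComp K i1 p1) (cComp K i2 p2)) (cId K B)"
    using tensor_comp[OF b(3) b(1) iB iB] tensor_comp[OF b(4) b(2) iB iB] cB
      tensor_right_plus[OF B comp_in_hom[OF b(3) b(1)] comp_in_hom[OF b(4) b(2)]] by simp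
  then show ?thesis
    unfolding is_biproduct_def
    using tensor_in_hom[OF _ iB] b tensor_comp[OF b(1) b(3) iB iB] tensor_comp[OF b(2) b(4) iB iB]
      tensor_comp[OF b(1) b(4) iB iB] tensor_comp[OF b(2) b(3) iB iB] cB tensor_id[OF _ B]
      tensor_right_zero[OF _ _ B] ob
    by simp
qed

lemma sum_tensor_isomorphic:
  assumes "X \<in> cOb K" "X' \<in> cOb K" "B \<in> cOb K"
  shows "isomorphic K (cTen K (cSum K X X') B) (cSum K (cTen K X B) (cTen K X' B))"
  using biproduct_isomorphic[OF biproduct_tensor_right[OF sum_is_biproduct] sum_is_biproduct] assms
  by simp

subsection \<open>Thick subcategories and thick ideals\<close>

lemma thick_subcategoryD:
  assumes S: "thick_subcategory K S"
  shows "S \<subseteq> cOb K" and "cZobj K \<in> S" and "X \<in> cOb K \<Longrightarrow> cShift K X \<in> S \<longleftrightarrow> X \<in> S"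
    and "(u, v, w) \<in> cDist K \<Longrightarrow> two_of_three S (cDom K u) (cDom K v) (cDom K w)"
    and "X \<in> cOb K \<Longrightarrow> X' \<in> cOb K \<Longrightarrow> Y \<in> S \<Longrightarrow> isomorphic K Y (cSum K X X') \<Longrightarrow> X \<in> S"
proof -
  note def = S[unfolded thick_subcategory_def]
  show "S \<subseteq> cOb K" "cZobj K \<in> S" using def by blast+
  show "X \<in> cOb K \<Longrightarrow> cShift K X \<in> S \<longleftrightarrow> X \<in> S" using def by blast
  show "(u, v, w) \<in> cDist K \<Longrightarrow> two_of_three S (cDom K u) (cDom K v) (cDom K w)" using def by blast
  show "X \<in> cOb K \<Longrightarrow> X' \<in> cOb K \<Longrightarrow> Y \<in> S \<Longrightarrow> isomorphic K Y (cSum K X X') \<Longrightarrow> X \<in> S"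
    using def by blast
qed

lemma thick_subcategoryI:
  assumes "S \<subseteq> cOb K" and "cZobj K \<in> S"
    and "\<And>X. X \<in> cOb K \<Longrightarrow> cShift K X \<in> S \<longleftrightarrow> X \<in> S"
    and "\<And>u v w. (u, v, w) \<in> cDist K \<Longrightarrow> two_of_three S (cDom K u) (cDom K v) (cDom K w)"
    and "\<And>X X' Y. X \<in> cOb K \<Longrightarrow> X' \<in> cOb K \<Longrightarrow> Y \<in> S \<Longrightarrow> isomorphic K Y (cSum K X X') \<Longrightarrow> X \<in> S"
  shows "thick_subcategory K S"
  unfolding thick_subcategory_def using assms by blast

lemma thick_subcategory_isomorphic:
  assumes S: "thick_subcategory K S" and "Y \<in> S" "X \<in> cOb K" "isomorphic K Y X"
  shows "X \<in> S"
  using thick_subcategoryD(5)[OF S assms(3) zobj_obj assms(2)]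
    isomorphic_trans[OF assms(4) isomorphic_sum_zobj[OF assms(3)]] by blast

lemma thick_subcategory_isomorphic_iff:
  "thick_subcategory K S \<Longrightarrow> isomorphic K X Y \<Longrightarrow> X \<in> cOb K \<Longrightarrow> Y \<in> cOb K \<Longrightarrow> X \<in> S \<longleftrightarrow> Y \<in> S"
  using thick_subcategory_isomorphic isomorphic_sym by blast

lemma thick_subcategory_summand:
  assumes S: "thick_subcategory K S" and X: "X \<in> cOb K" and Y: "Y \<in> cOb K" and "cSum K X Y \<in> S"
  shows "X \<in> S" "Y \<in> S"
proof -
  have "isomorphic K (cSum K X Y) (cSum K X Y)"
    using isomorphicI[OF id_in_hom id_in_hom] comp_id_left[OF id_in_hom] sum_obj[OF X Y] by blast
  then show "X \<in> S" using thick_subcategoryD(5)[OF S X Y assms(4)] by blast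
  show "Y \<in> S" using thick_subcategoryD(5)[OF S Y X assms(4)] isomorphic_sum_swap[OF X Y] by blast
qed

lemma thick_subcategory_sum:
  assumes S: "thick_subcategory K S" and "X \<in> S" "Y \<in> S"
  shows "cSum K X Y \<in> S"
proof -
  have X: "X \<in> cOb K" and Y: "Y \<in> cOb K" using thick_subcategoryD(1)[OF S] assms by auto
  have in1: "cIn1 K X Y \<in> hom K X (cSum K X Y)" using biproductD(1)[OF sum_is_biproduct[OF X Y]] .
  obtain v w where d: "(cIn1 K X Y, v, w) \<in> cDist K" using dist_exists hom_arrow[OF in1] by blast
  have "cDom K w \<in> S"
    using thick_subcategory_isomorphic[OF S \<open>Y \<in> S\<close> _ cone_of_sum_inclusion[OF d X Y]]
      hom_obj[OF dist_in_hom(3)[OF d]] by blast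
  moreover have "cDom K v = cSum K X Y" using hom_cod[OF dist_in_hom(1)[OF d]] hom_cod[OF in1] by simp
  ultimately show ?thesis
    using thick_subcategoryD(4)[OF S d] hom_dom[OF in1] \<open>X \<in> S\<close> unfolding two_of_three_def by simp
qed

lemma two_of_three_Inter:
  "(\<And>S. S \<in> F \<Longrightarrow> two_of_three S A B C) \<Longrightarrow> two_of_three (\<Inter>F) A B C"
  unfolding two_of_three_def by (intro conjI impI InterI; meson InterD)

lemma thick_subcategory_Inter:
  assumes "F \<noteq> {}" and S: "\<And>S. S \<in> F \<Longrightarrow> thick_subcategory K S"
  shows "thick_subcategory K (\<Inter>F)"
proof (rule thick_subcategoryI)
  show "\<Inter>F \<subseteq> cOb K" using assms(1) thick_subcategoryD(1)[OF S] by blast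
  show "cZobj K \<in> \<Inter>F" using thick_subcategoryD(2)[OF S] by blast
  show "cShift K X \<in> \<Inter>F \<longleftrightarrow> X \<in> \<Inter>F" if X: "X \<in> cOb K" for X
    using Inter_mem_iff_cong[OF thick_subcategoryD(3)[OF S X]] .
  show "two_of_three (\<Inter>F) (cDom K u) (cDom K v) (cDom K w)" if d: "(u, v, w) \<in> cDist K" for u v w
    by (rule two_of_three_Inter) (rule thick_subcategoryD(4)[OF S d])
  show "X \<in> \<Inter>F"
    if X: "X \<in> cOb K" and X': "X' \<in> cOb K" and Y: "Y \<in> \<Inter>F" and i: "isomorphic K Y (cSum K X X')"
    for X X' Y
  proof
    fix T assume T: "T \<in> F"
    show "X \<in> T" using thick_subcategoryD(5)[OF S[OF T] X X' InterD[OF Y T] i] .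
  qed
qed

lemma two_of_three_directed_Union:
  assumes common: "\<And>X Y. X \<in> \<Union>F \<Longrightarrow> Y \<in> \<Union>F \<Longrightarrow> \<exists>U \<in> F. X \<in> U \<and> Y \<in> U"
    and two: "\<And>U. U \<in> F \<Longrightarrow> two_of_three U A B C"
  shows "two_of_three (\<Union>F) A B C"
  unfolding two_of_three_def
proof (intro conjI impI)
  show "C \<in> \<Union>F" if "A \<in> \<Union>F" "B \<in> \<Union>F"
    using common[OF that] two unfolding two_of_three_def by blast
  show "A \<in> \<Union>F" if "B \<in> \<Union>F" "C \<in> \<Union>F"
    using common[OF that] two unfolding two_of_three_def by blast
  show "B \<in> \<Union>F" if "C \<in> \<Union>F" "A \<in> \<Union>F"
    using common[OF that] two unfolding two_of_three_def by blast
qed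

lemma thick_subcategory_directed_Union:
  assumes "F \<noteq> {}" and S: "\<And>S. S \<in> F \<Longrightarrow> thick_subcategory K S"
    and directed: "\<And>S T. S \<in> F \<Longrightarrow> T \<in> F \<Longrightarrow> \<exists>U \<in> F. S \<subseteq> U \<and> T \<subseteq> U"
  shows "thick_subcategory K (\<Union>F)"
proof (rule thick_subcategoryI)
  show "\<Union>F \<subseteq> cOb K" using thick_subcategoryD(1)[OF S] by blast
  show "cZobj K \<in> \<Union>F" using assms(1) thick_subcategoryD(2)[OF S] by blast
  show "cShift K X \<in> \<Union>F \<longleftrightarrow> X \<in> \<Union>F" if X: "X \<in> cOb K" for X
    using Union_mem_iff_cong[OF thick_subcategoryD(3)[OF S X]] .
  show "two_of_three (\<Union>F) (cDom K u) (cDom K v) (cDom K w)" if d: "(u, v, w) \<in> cDist K" for u v w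
  proof (rule two_of_three_directed_Union)
    fix X Y assume "X \<in> \<Union>F" "Y \<in> \<Union>F"
    then obtain S T where "S \<in> F" "T \<in> F" "X \<in> S" "Y \<in> T" by blast
    then show "\<exists>U \<in> F. X \<in> U \<and> Y \<in> U" using directed[of S T] by blast
  qed (rule thick_subcategoryD(4)[OF S d])
  show "X \<in> \<Union>F"
    if X: "X \<in> cOb K" and X': "X' \<in> cOb K" and Y: "Y \<in> \<Union>F" and i: "isomorphic K Y (cSum K X X')"
    for X X' Y
  proof -
    obtain U where U: "U \<in> F" "Y \<in> U" using Y by blast
    then show ?thesis using thick_subcategoryD(5)[OF S[OF U(1)] X X' U(2) i] by blast
  qed
qed

lemma two_of_three_preimage:
  "two_of_three S (f A) (f B) (f C) \<Longrightarrow> A \<in> D \<Longrightarrow> B \<in> D \<Longrightarrow> C \<in> D \<Longrightarrow>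
   two_of_three {X \<in> D. f X \<in> S} A B C"
  unfolding two_of_three_def by simp

lemma thick_subcategory_tensor_preimage:
  assumes S: "thick_subcategory K S" and B: "B \<in> cOb K"
  shows "thick_subcategory K {X \<in> cOb K. cTen K X B \<in> S}"
proof (rule thick_subcategoryI)
  show "{X \<in> cOb K. cTen K X B \<in> S} \<subseteq> cOb K" by blast
  show "cZobj K \<in> {X \<in> cOb K. cTen K X B \<in> S}"
    using thick_subcategory_isomorphic[OF S thick_subcategoryD(2)[OF S] _
        isomorphic_sym[OF zobj_tensor_isomorphic[OF B]]] B by simp
  show "cShift K X \<in> {X \<in> cOb K. cTen K X B \<in> S} \<longleftrightarrow> X \<in> {X \<in> cOb K. cTen K X B \<in> S}"
    if X: "X \<in> cOb K" for X
  proof -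
    have "cTen K (cShift K X) B \<in> S \<longleftrightarrow> cShift K (cTen K X B) \<in> S"
      using thick_subcategory_isomorphic_iff[OF S shift_tensor_isomorphic[OF X B]] X B by simp
    then show ?thesis using thick_subcategoryD(3)[OF S] X B by simp
  qed
  show "two_of_three {X \<in> cOb K. cTen K X B \<in> S} (cDom K u) (cDom K v) (cDom K w)"
    if d: "(u, v, w) \<in> cDist K" for u v w
  proof -
    obtain w' where d': "(cTenM K u (cId K B), cTenM K v (cId K B), w') \<in> cDist K"
      using dist_tensor_right[OF d B] by blast
    have u: "u \<in> hom K (cDom K u) (cDom K v)" and v: "v \<in> hom K (cDom K v) (cDom K w)"
      using dist_in_hom[OF d] by blast+
    have tu: "cTenM K u (cId K B) \<in> hom K (cTen K (cDom K u) B) (cTen K (cDom K v) B)"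
      using tensor_in_hom[OF u id_in_hom[OF B]] .
    have tv: "cTenM K v (cId K B) \<in> hom K (cTen K (cDom K v) B) (cTen K (cDom K w) B)"
      using tensor_in_hom[OF v id_in_hom[OF B]] .
    have "cDom K w' = cTen K (cDom K w) B"
      using hom_cod[OF dist_in_hom(2)[OF d']] hom_cod[OF tv] by simp
    then have "two_of_three S (cTen K (cDom K u) B) (cTen K (cDom K v) B) (cTen K (cDom K w) B)"
      using thick_subcategoryD(4)[OF S d'] hom_dom[OF tu] hom_dom[OF tv] by simp
    then show ?thesis
      using two_of_three_preimage[where f = "\<lambda>X. cTen K X B" and D = "cOb K"]
        hom_obj[OF u] hom_obj[OF v] by simp
  qed
  show "X \<in> {X \<in> cOb K. cTen K X B \<in> S}"
    if X: "X \<in> cOb K" and X': "X' \<in> cOb K" and Y: "Y \<in> {X \<in> cOb K. cTen K X B \<in> S}"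
      and i: "isomorphic K Y (cSum K X X')"
    for X X' Y
  proof -
    have "isomorphic K (cTen K Y B) (cSum K (cTen K X B) (cTen K X' B))"
      using isomorphic_trans[OF tensor_right_isomorphic[OF i B] sum_tensor_isomorphic[OF X X' B]] .
    then have "cTen K X B \<in> S"
      using thick_subcategoryD(5)[OF S tensor_obj[OF X B] tensor_obj[OF X' B]] Y by blast
    then show ?thesis using X by blast
  qed
qed

lemma thick_ideal_subcategory: "thick_ideal K I \<Longrightarrow> thick_subcategory K I"
  and thick_ideal_tensor: "thick_ideal K I \<Longrightarrow> A \<in> I \<Longrightarrow> B \<in> cOb K \<Longrightarrow> cTen K A B \<in> I \<and> cTen K B A \<in> I"
  by (simp_all add: thick_ideal_iff_subcategory)

lemma thick_ideal_obj: "thick_ideal K I \<Longrightarrow> A \<in> I \<Longrightarrow> A \<in> cOb K"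
  using thick_subcategoryD(1)[OF thick_ideal_subcategory] by blast

lemma thick_idealI:
  "thick_subcategory K I \<Longrightarrow> (\<And>A B. A \<in> I \<Longrightarrow> B \<in> cOb K \<Longrightarrow> cTen K A B \<in> I \<and> cTen K B A \<in> I)
   \<Longrightarrow> thick_ideal K I"
  by (simp add: thick_ideal_iff_subcategory)

lemma thick_ideal_Ob: "thick_ideal K (cOb K)"
proof (intro thick_idealI thick_subcategoryI)
  show "two_of_three (cOb K) (cDom K u) (cDom K v) (cDom K w)" if d: "(u, v, w) \<in> cDist K" for u v w
    using hom_obj[OF dist_in_hom(1)[OF d]] hom_obj[OF dist_in_hom(2)[OF d]]
    unfolding two_of_three_def by blast
qed simp_all

lemma thick_ideal_Inter:
  assumes "F \<noteq> {}" and "\<And>I. I \<in> F \<Longrightarrow> thick_ideal K I"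
  shows "thick_ideal K (\<Inter>F)"
proof (rule thick_idealI)
  show "thick_subcategory K (\<Inter>F)"
    using thick_subcategory_Inter[OF assms(1)] thick_ideal_subcategory assms(2) by blast
  show "cTen K A B \<in> \<Inter>F \<and> cTen K B A \<in> \<Inter>F" if "A \<in> \<Inter>F" "B \<in> cOb K" for A B
    using thick_ideal_tensor assms(2) that by blast
qed

lemma thick_ideal_directed_Union:
  assumes "F \<noteq> {}" and "\<And>I. I \<in> F \<Longrightarrow> thick_ideal K I"
    and "\<And>I J. I \<in> F \<Longrightarrow> J \<in> F \<Longrightarrow> \<exists>L \<in> F. I \<subseteq> L \<and> J \<subseteq> L"
  shows "thick_ideal K (\<Union>F)"
proof (rule thick_idealI)
  show "thick_subcategory K (\<Union>F)"
    using thick_subcategory_directed_Union[OF assms(1) _ assms(3)] thick_ideal_subcategory assms(2)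
    by blast
  show "cTen K A B \<in> \<Union>F \<and> cTen K B A \<in> \<Union>F" if "A \<in> \<Union>F" "B \<in> cOb K" for A B
    using thick_ideal_tensor assms(2) that by blast
qed

lemma thick_ideal_unit_imp_Ob:
  assumes I: "thick_ideal K I" and "cUnit K \<in> I"
  shows "I = cOb K"
proof
  show "I \<subseteq> cOb K" using thick_ideal_obj[OF I] by blast
  show "cOb K \<subseteq> I"
  proof
    fix B assume B: "B \<in> cOb K"
    have "cTen K (cUnit K) B \<in> I" using thick_ideal_tensor[OF I assms(2) B] by blast
    then show "B \<in> I"
      using thick_subcategory_isomorphic[OF thick_ideal_subcategory[OF I] _ B unit_tensor_isomorphic[OF B]]
      by blast
  qed
qed

lemma proper_ideal_iff_unit: "thick_ideal K I \<Longrightarrow> proper_ideal K I \<longleftrightarrow> cUnit K \<notin> I"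
  unfolding proper_ideal_def using thick_ideal_unit_imp_Ob unit_obj by blast

subsection \<open>Generated ideals and maximal ideals\<close>

lemma gen_ideal_thick: "S \<subseteq> cOb K \<Longrightarrow> thick_ideal K (gen_ideal K S)"
  unfolding gen_ideal_def by (rule thick_ideal_Inter) (use thick_ideal_Ob in auto)

lemma gen_ideal_subset: "S \<subseteq> gen_ideal K S"
  unfolding gen_ideal_def by blast

lemma gen_ideal_least: "thick_ideal K I \<Longrightarrow> S \<subseteq> I \<Longrightarrow> gen_ideal K S \<subseteq> I"
  unfolding gen_ideal_def by blast

lemma gen_ideal_obj: "S \<subseteq> cOb K \<Longrightarrow> gen_ideal K S \<subseteq> cOb K"
  using gen_ideal_least[OF thick_ideal_Ob] .

lemma proper_ideal_subset: "proper_ideal K I \<Longrightarrow> thick_ideal K J \<Longrightarrow> J \<subseteq> I \<Longrightarrow> proper_ideal K J"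
  unfolding proper_ideal_def using thick_ideal_obj by blast

lemma gen_ideal_Un_gen_ideal:
  assumes "S \<subseteq> cOb K" "T \<subseteq> cOb K"
  shows "gen_ideal K (gen_ideal K S \<union> gen_ideal K T) = gen_ideal K (S \<union> T)"
proof
  have G: "thick_ideal K (gen_ideal K (S \<union> T))" using gen_ideal_thick assms by simp
  have "gen_ideal K S \<subseteq> gen_ideal K (S \<union> T)" "gen_ideal K T \<subseteq> gen_ideal K (S \<union> T)"
    using gen_ideal_least[OF G] gen_ideal_subset[of "S \<union> T"] by blast+
  then show "gen_ideal K (gen_ideal K S \<union> gen_ideal K T) \<subseteq> gen_ideal K (S \<union> T)"
    using gen_ideal_least[OF G] by blast
  have "thick_ideal K (gen_ideal K (gen_ideal K S \<union> gen_ideal K T))"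
    using gen_ideal_thick gen_ideal_obj assms by (metis le_sup_iff)
  moreover have "S \<union> T \<subseteq> gen_ideal K (gen_ideal K S \<union> gen_ideal K T)"
    using gen_ideal_subset by blast
  ultimately show "gen_ideal K (S \<union> T) \<subseteq> gen_ideal K (gen_ideal K S \<union> gen_ideal K T)"
    using gen_ideal_least by blast
qed

lemma exists_maximal_ideal:
  assumes "proper_ideal K I"
  obtains M where "maximal_ideal K M" "I \<subseteq> M"
proof -
  define \<A> where "\<A> = {J. proper_ideal K J \<and> I \<subseteq> J}"
  have "\<exists>U \<in> \<A>. \<forall>J \<in> C. J \<subseteq> U" if C: "C \<in> chains \<A>" for C
  proof (cases "C = {}")
    case True
    then show ?thesis using assms unfolding \<A>_def by blast
  next
    case False
    have CA: "C \<subseteq> \<A>" using C unfolding chains_def by blast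
    have thick: "thick_ideal K J" if J: "J \<in> C" for J
    proof -
      have "proper_ideal K J" using CA J unfolding \<A>_def by blast
      then show ?thesis unfolding proper_ideal_def by blast
    qed
    have "thick_ideal K (\<Union>C)"
    proof (rule thick_ideal_directed_Union[OF False thick])
      fix J J' assume JJ': "J \<in> C" "J' \<in> C"
      then have "J \<subseteq> J' \<or> J' \<subseteq> J" using C unfolding chains_def chain_subset_def by blast
      then show "\<exists>L \<in> C. J \<subseteq> L \<and> J' \<subseteq> L" using JJ' by blast
    qed
    moreover have "cUnit K \<notin> \<Union>C"
      using CA thick proper_ideal_iff_unit unfolding \<A>_def by blast
    ultimately have "proper_ideal K (\<Union>C)" using proper_ideal_iff_unit by blast
    moreover have "I \<subseteq> \<Union>C" using False CA unfolding \<A>_def by blast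
    ultimately show ?thesis unfolding \<A>_def by blast
  qed
  then obtain M where M: "M \<in> \<A>" "\<forall>J \<in> \<A>. M \<subseteq> J \<longrightarrow> J = M"
    using Zorn_Lemma2[of \<A>] by blast
  then have "maximal_ideal K M" unfolding maximal_ideal_def \<A>_def by blast
  moreover have "I \<subseteq> M" using M(1) unfolding \<A>_def by blast
  ultimately show ?thesis by (rule that)
qed

lemma maximal_ideal_proper: "maximal_ideal K M \<Longrightarrow> proper_ideal K M"
  unfolding maximal_ideal_def by blast

lemma maximal_ideal_thick: "maximal_ideal K M \<Longrightarrow> thick_ideal K M"
  unfolding maximal_ideal_def proper_ideal_def by blast

lemma maximal_idealD: "maximal_ideal K M \<Longrightarrow> proper_ideal K I \<Longrightarrow> M \<subseteq> I \<Longrightarrow> I = M"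
  unfolding maximal_ideal_def by blast

lemma thick_ideal_tensor_quotient:
  assumes M: "thick_ideal K M" and J: "thick_ideal K J"
  shows "thick_ideal K {X \<in> cOb K. \<forall>B \<in> J. cTen K X B \<in> M}" (is "thick_ideal K ?N")
proof (rule thick_idealI)
  have MS: "thick_subcategory K M" using thick_ideal_subcategory[OF M] .
  have J0: "cZobj K \<in> J" using thick_subcategoryD(2)[OF thick_ideal_subcategory[OF J]] .
  then have "?N = (\<Inter>B \<in> J. {X \<in> cOb K. cTen K X B \<in> M})" by auto
  moreover have "thick_subcategory K (\<Inter>B \<in> J. {X \<in> cOb K. cTen K X B \<in> M})"
  proof (rule thick_subcategory_Inter)
    show "(\<lambda>B. {X \<in> cOb K. cTen K X B \<in> M}) ` J \<noteq> {}" using J0 by blast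
    fix S assume "S \<in> (\<lambda>B. {X \<in> cOb K. cTen K X B \<in> M}) ` J"
    then obtain B where "B \<in> J" "S = {X \<in> cOb K. cTen K X B \<in> M}" by blast
    then show "thick_subcategory K S"
      using thick_subcategory_tensor_preimage[OF MS thick_ideal_obj[OF J]] by simp
  qed
  ultimately show "thick_subcategory K ?N" by simp
  show "cTen K A C \<in> ?N \<and> cTen K C A \<in> ?N" if A: "A \<in> ?N" and C: "C \<in> cOb K" for A C
  proof -
    have Ao: "A \<in> cOb K" using A by blast
    have "cTen K (cTen K A C) B \<in> M \<and> cTen K (cTen K C A) B \<in> M" if B: "B \<in> J" for B
    proof -
      have Bo: "B \<in> cOb K" using thick_ideal_obj[OF J B] .
      have "cTen K A (cTen K C B) \<in> M"
        using A thick_ideal_tensor[OF J B C] by blast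
      moreover have "cTen K C (cTen K A B) \<in> M"
        using A B thick_ideal_tensor[OF M _ C] by blast
      ultimately show ?thesis
        using thick_subcategory_isomorphic[OF MS] isomorphic_sym tensor_assoc_isomorphic Ao C Bo
        by (meson tensor_obj)
    qed
    then show ?thesis using Ao C by simp
  qed
qed

lemma maximal_ideal_prime:
  assumes M: "maximal_ideal K M"
  shows "prime_ideal K M"
  unfolding prime_ideal_def
proof (intro conjI allI impI)
  show "proper_ideal K M" using maximal_ideal_proper[OF M] .
  fix I J assume I: "thick_ideal K I" and J: "thick_ideal K J"
    and IJ: "\<forall>A \<in> I. \<forall>B \<in> J. cTen K A B \<in> M"
  let ?N = "{X \<in> cOb K. \<forall>B \<in> J. cTen K X B \<in> M}"
  have N: "thick_ideal K ?N" using thick_ideal_tensor_quotient[OF maximal_ideal_thick[OF M] J] .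
  have MN: "M \<subseteq> ?N" using thick_ideal_obj thick_ideal_tensor maximal_ideal_thick[OF M] J by blast
  show "I \<subseteq> M \<or> J \<subseteq> M"
  proof (cases "?N = cOb K")
    case True
    have "J \<subseteq> M"
    proof
      fix B assume B: "B \<in> J"
      then have "cTen K (cUnit K) B \<in> M" using True unit_obj by blast
      then show "B \<in> M"
        using thick_subcategory_isomorphic[OF thick_ideal_subcategory[OF maximal_ideal_thick[OF M]] _ _
            unit_tensor_isomorphic] thick_ideal_obj[OF J B] by blast
    qed
    then show ?thesis by blast
  next
    case False
    then have "?N = M" using maximal_idealD[OF M _ MN] N unfolding proper_ideal_def by blast
    moreover have "I \<subseteq> ?N" using IJ thick_ideal_obj[OF I] by blast
    ultimately show ?thesis by blast
  qed
qed

subsection \<open>Coprime ideals and the spectrum\<close>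

lemma proper_ideal_in_prime:
  assumes "proper_ideal K I"
  obtains P where "P \<in> Spc K" "I \<subseteq> P"
proof -
  obtain M where "maximal_ideal K M" "I \<subseteq> M" using exists_maximal_ideal[OF assms] .
  then have "M \<in> Spc K" "I \<subseteq> M" using maximal_ideal_prime unfolding Spc_def by auto
  then show ?thesis by (rule that)
qed

lemma coprime_not_in_proper:
  assumes c: "coprime K I J" and P: "proper_ideal K P" and "I \<subseteq> P" "J \<subseteq> P"
  shows False
proof -
  have "gen_ideal K (I \<union> J) \<subseteq> P"
    using gen_ideal_least P assms(3,4) unfolding proper_ideal_def by blast
  then have "cOb K \<subseteq> P" using c unfolding coprime_def by simp
  then show False using P thick_ideal_obj unfolding proper_ideal_def by blast
qed

lemma coprime_iff_no_common_prime:
  assumes "I \<union> J \<subseteq> cOb K"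
  shows "coprime K I J \<longleftrightarrow> (\<forall>P \<in> Spc K. \<not> (I \<subseteq> P \<and> J \<subseteq> P))"
proof (rule iffI)
  assume c: "coprime K I J"
  show "\<forall>P \<in> Spc K. \<not> (I \<subseteq> P \<and> J \<subseteq> P)"
  proof (intro ballI notI)
    fix P assume "P \<in> Spc K" and "I \<subseteq> P \<and> J \<subseteq> P"
    then show False using coprime_not_in_proper[OF c] unfolding Spc_def prime_ideal_def by blast
  qed
next
  assume none: "\<forall>P \<in> Spc K. \<not> (I \<subseteq> P \<and> J \<subseteq> P)"
  show "coprime K I J"
    unfolding coprime_def
  proof (rule ccontr)
    assume "gen_ideal K (I \<union> J) \<noteq> cOb K"
    then have "proper_ideal K (gen_ideal K (I \<union> J))"
      using gen_ideal_thick[OF assms] unfolding proper_ideal_def by blast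
    then obtain P where "P \<in> Spc K" "gen_ideal K (I \<union> J) \<subseteq> P" by (rule proper_ideal_in_prime)
    then show False using none gen_ideal_subset[of "I \<union> J"] by blast
  qed
qed

lemma proper_principal_iff_in_prime:
  assumes "A \<in> cOb K"
  shows "proper_ideal K (gen_ideal K {A}) \<longleftrightarrow> (\<exists>P \<in> Spc K. A \<in> P)"
proof
  assume "proper_ideal K (gen_ideal K {A})"
  then obtain P where "P \<in> Spc K" "gen_ideal K {A} \<subseteq> P" by (rule proper_ideal_in_prime)
  then show "\<exists>P \<in> Spc K. A \<in> P" using gen_ideal_subset by blast
next
  assume "\<exists>P \<in> Spc K. A \<in> P"
  then obtain P where P: "proper_ideal K P" "A \<in> P" unfolding Spc_def prime_ideal_def by blast
  then have "gen_ideal K {A} \<subseteq> P"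
    using gen_ideal_least unfolding proper_ideal_def by blast
  then show "proper_ideal K (gen_ideal K {A})"
    using proper_ideal_subset[OF P(1) gen_ideal_thick] assms by simp
qed

lemma maximal_ideals_coprime:
  assumes M1: "maximal_ideal K M1" and M2: "maximal_ideal K M2" and "M1 \<noteq> M2"
  shows "coprime K M1 M2"
  unfolding coprime_def
proof (rule ccontr)
  let ?G = "gen_ideal K (M1 \<union> M2)"
  assume "?G \<noteq> cOb K"
  moreover have "M1 \<union> M2 \<subseteq> cOb K"
    using thick_ideal_obj maximal_ideal_thick M1 M2 by blast
  ultimately have "proper_ideal K ?G"
    using gen_ideal_thick unfolding proper_ideal_def by blast
  moreover have "M1 \<subseteq> ?G" "M2 \<subseteq> ?G" using gen_ideal_subset[of "M1 \<union> M2"] by auto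
  ultimately have "?G = M1" "?G = M2" using maximal_idealD M1 M2 by auto
  then show False using \<open>M1 \<noteq> M2\<close> by simp
qed

text \<open>The ideals generated by pairs A \<in> I, B \<in> J form a directed family (pairs are combined by
  direct sums), whose union contains I \<union> J and hence the unit.\<close>

lemma coprime_witnesses:
  assumes I: "thick_ideal K I" and J: "thick_ideal K J" and c: "coprime K I J"
  obtains A B where "A \<in> I" "B \<in> J" "gen_ideal K {A, B} = cOb K"
proof -
  define F where "F = {gen_ideal K {A, B} | A B. A \<in> I \<and> B \<in> J}"
  have F: "gen_ideal K {A, B} \<in> F" if "A \<in> I" "B \<in> J" for A B
    unfolding F_def using that by blast
  have thick: "thick_ideal K G" if G: "G \<in> F" for G
  proof -
    obtain A B where "A \<in> I" "B \<in> J" "G = gen_ideal K {A, B}" using G unfolding F_def by blast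
    then show ?thesis using gen_ideal_thick thick_ideal_obj[OF I] thick_ideal_obj[OF J] by simp
  qed
  have directed: "\<exists>L \<in> F. G \<subseteq> L \<and> H \<subseteq> L" if GH: "G \<in> F" "H \<in> F" for G H
  proof -
    obtain A B A' B' where AB: "A \<in> I" "B \<in> J" "A' \<in> I" "B' \<in> J"
      and G: "G = gen_ideal K {A, B}" and H: "H = gen_ideal K {A', B'}"
      using GH unfolding F_def by blast
    let ?L = "gen_ideal K {cSum K A A', cSum K B B'}"
    have L: "?L \<in> F"
      using F thick_subcategory_sum[OF thick_ideal_subcategory[OF I] AB(1,3)]
        thick_subcategory_sum[OF thick_ideal_subcategory[OF J] AB(2,4)] by blast
    note L_summand = thick_subcategory_summand[OF thick_ideal_subcategory[OF thick[OF L]]]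
    have "cSum K A A' \<in> ?L" "cSum K B B' \<in> ?L"
      using gen_ideal_subset[of "{cSum K A A', cSum K B B'}"] by auto
    then have "{A, B} \<subseteq> ?L" "{A', B'} \<subseteq> ?L"
      using L_summand thick_ideal_obj[OF I AB(1)] thick_ideal_obj[OF J AB(2)]
        thick_ideal_obj[OF I AB(3)] thick_ideal_obj[OF J AB(4)] by auto
    then have "G \<subseteq> ?L" "H \<subseteq> ?L" using gen_ideal_least[OF thick[OF L]] G H by simp_all
    then show ?thesis using L by blast
  qed
  have zero: "cZobj K \<in> I" "cZobj K \<in> J"
    using thick_subcategoryD(2)[OF thick_ideal_subcategory] I J by blast+
  have "X \<in> \<Union>F" if "X \<in> I \<union> J" for X
  proof -
    have "gen_ideal K {X, cZobj K} \<in> F \<or> gen_ideal K {cZobj K, X} \<in> F"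
      using that F zero by blast
    then show ?thesis using gen_ideal_subset by blast
  qed
  moreover have "thick_ideal K (\<Union>F)"
    using thick_ideal_directed_Union[OF _ thick directed] F[OF zero] by blast
  ultimately have "gen_ideal K (I \<union> J) \<subseteq> \<Union>F" using gen_ideal_least by blast
  then obtain G where G: "G \<in> F" "cUnit K \<in> G" using c unit_obj unfolding coprime_def by blast
  then obtain A B where "A \<in> I" "B \<in> J" "G = gen_ideal K {A, B}" unfolding F_def by blast
  moreover have "G = cOb K" using thick_ideal_unit_imp_Ob[OF thick[OF G(1)] G(2)] .
  ultimately show ?thesis by (intro that) simp_all
qed

lemma coprime_principal_witnesses:
  assumes I: "proper_ideal K I" and J: "proper_ideal K J" and c: "coprime K I J"
  obtains A B where "A \<in> cOb K" "B \<in> cOb K"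
    "proper_ideal K (gen_ideal K {A})" "proper_ideal K (gen_ideal K {B})"
    "coprime K (gen_ideal K {A}) (gen_ideal K {B})"
proof -
  have TI: "thick_ideal K I" and TJ: "thick_ideal K J" using I J unfolding proper_ideal_def by blast+
  obtain A B where AB: "A \<in> I" "B \<in> J" "gen_ideal K {A, B} = cOb K"
    using coprime_witnesses[OF TI TJ c] .
  have A: "A \<in> cOb K" and B: "B \<in> cOb K" using thick_ideal_obj TI TJ AB by blast+
  have "gen_ideal K {A} \<subseteq> I" and "gen_ideal K {B} \<subseteq> J"
    using gen_ideal_least[OF TI] gen_ideal_least[OF TJ] AB by simp_all
  then have "proper_ideal K (gen_ideal K {A})" and "proper_ideal K (gen_ideal K {B})"
    using proper_ideal_subset[OF I gen_ideal_thick] proper_ideal_subset[OF J gen_ideal_thick] A B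
    by simp_all
  moreover have "coprime K (gen_ideal K {A}) (gen_ideal K {B})"
    using gen_ideal_Un_gen_ideal[of "{A}" "{B}"] A B AB(3) unfolding coprime_def by (simp add: insert_commute)
  ultimately show ?thesis using A B by (intro that)
qed

lemma spc_closed_supp: "spc_closed K (supp K A)" if "A \<in> cOb K"
  unfolding spc_closed_def by (rule exI[of _ "{A}"]) (auto simp: that supp_def)

lemma supp_psubset_Spc:
  assumes "A \<in> cOb K" and "proper_ideal K (gen_ideal K {A})"
  shows "supp K A \<subset> Spc K"
proof -
  obtain P where "P \<in> Spc K" "A \<in> P" using assms proper_principal_iff_in_prime by blast
  then show ?thesis unfolding supp_def by blast
qed

lemma coprime_principal_imp_reducible:
  assumes A: "A \<in> cOb K" and B: "B \<in> cOb K"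
    and pA: "proper_ideal K (gen_ideal K {A})" and pB: "proper_ideal K (gen_ideal K {B})"
    and c: "coprime K (gen_ideal K {A}) (gen_ideal K {B})"
  shows "\<exists>Z1 Z2. spc_closed K Z1 \<and> spc_closed K Z2 \<and> Z1 \<subset> Spc K \<and> Z2 \<subset> Spc K \<and> Spc K = Z1 \<union> Z2"
proof (intro exI conjI)
  show "spc_closed K (supp K A)" "spc_closed K (supp K B)" using spc_closed_supp A B by blast+
  show "supp K A \<subset> Spc K" "supp K B \<subset> Spc K" using supp_psubset_Spc A B pA pB by blast+
  have "gen_ideal K {A} \<union> gen_ideal K {B} \<subseteq> cOb K" using gen_ideal_obj A B by simp
  then have none: "\<forall>P \<in> Spc K. \<not> (gen_ideal K {A} \<subseteq> P \<and> gen_ideal K {B} \<subseteq> P)"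
    using c by (rule iffD1[OF coprime_iff_no_common_prime])
  have "P \<in> supp K A \<union> supp K B" if P: "P \<in> Spc K" for P
  proof (rule ccontr)
    assume "P \<notin> supp K A \<union> supp K B"
    moreover have "thick_ideal K P" using P unfolding Spc_def prime_ideal_def proper_ideal_def by blast
    ultimately have "gen_ideal K {A} \<subseteq> P \<and> gen_ideal K {B} \<subseteq> P"
      using P gen_ideal_least unfolding supp_def by blast
    then show False using none P by blast
  qed
  then show "Spc K = supp K A \<union> supp K B" unfolding supp_def by blast
qed

lemma reducible_imp_coprime_principal:
  assumes Z: "spc_closed K Z1" "spc_closed K Z2" "Z1 \<subset> Spc K" "Z2 \<subset> Spc K" "Spc K = Z1 \<union> Z2"
  obtains A B where "A \<in> cOb K" "B \<in> cOb K"
    "proper_ideal K (gen_ideal K {A})" "proper_ideal K (gen_ideal K {B})"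
    "coprime K (gen_ideal K {A}) (gen_ideal K {B})"
proof -
  have pick: "\<exists>A \<in> \<A>. A \<in> cOb K \<and> proper_ideal K (gen_ideal K {A})"
    if \<A>: "\<A> \<subseteq> cOb K" and Z: "Spc K \<inter> (\<Inter>A \<in> \<A>. supp K A) \<subset> Spc K" for \<A>
  proof -
    obtain A P where "A \<in> \<A>" "P \<in> Spc K" "A \<in> P" using Z unfolding supp_def by blast
    then show ?thesis using \<A> proper_principal_iff_in_prime by blast
  qed
  obtain \<A>1 \<A>2 where A: "\<A>1 \<subseteq> cOb K" "\<A>2 \<subseteq> cOb K"
    and Z1: "Z1 = Spc K \<inter> (\<Inter>A \<in> \<A>1. supp K A)" and Z2: "Z2 = Spc K \<inter> (\<Inter>A \<in> \<A>2. supp K A)"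
    using Z(1,2) unfolding spc_closed_def by blast
  obtain A1 A2 where A12: "A1 \<in> \<A>1" "A2 \<in> \<A>2" and ob: "A1 \<in> cOb K" "A2 \<in> cOb K"
    and p: "proper_ideal K (gen_ideal K {A1})" "proper_ideal K (gen_ideal K {A2})"
    using pick[OF A(1)] pick[OF A(2)] Z(3,4) unfolding Z1 Z2 by blast
  have "gen_ideal K {A1} \<union> gen_ideal K {A2} \<subseteq> cOb K" using gen_ideal_obj ob by simp
  moreover have "\<forall>P \<in> Spc K. \<not> (gen_ideal K {A1} \<subseteq> P \<and> gen_ideal K {A2} \<subseteq> P)"
  proof (intro ballI notI)
    fix P assume P: "P \<in> Spc K" and "gen_ideal K {A1} \<subseteq> P \<and> gen_ideal K {A2} \<subseteq> P"
    then have "A1 \<in> P" "A2 \<in> P" using gen_ideal_subset[of "{A1}"] gen_ideal_subset[of "{A2}"] by auto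
    then have "P \<notin> supp K A1" "P \<notin> supp K A2" unfolding supp_def by simp_all
    then have "P \<notin> Z1" "P \<notin> Z2" using A12 unfolding Z1 Z2 by auto
    then show False using P Z(5) by blast
  qed
  ultimately have "coprime K (gen_ideal K {A1}) (gen_ideal K {A2})"
    by (rule iffD2[OF coprime_iff_no_common_prime])
  then show ?thesis using ob p by (intro that)
qed

lemma coprime_iff_coprime_principal:
  "(\<exists>I J. proper_ideal K I \<and> proper_ideal K J \<and> coprime K I J)
     \<longleftrightarrow> (\<exists>A \<in> cOb K. \<exists>B \<in> cOb K. proper_ideal K (gen_ideal K {A}) \<and>
            proper_ideal K (gen_ideal K {B}) \<and> coprime K (gen_ideal K {A}) (gen_ideal K {B}))"
proof
  assume "\<exists>I J. proper_ideal K I \<and> proper_ideal K J \<and> coprime K I J"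
  then obtain I J where "proper_ideal K I" "proper_ideal K J" "coprime K I J" by blast
  from coprime_principal_witnesses[OF this]
  show "\<exists>A \<in> cOb K. \<exists>B \<in> cOb K. proper_ideal K (gen_ideal K {A}) \<and>
          proper_ideal K (gen_ideal K {B}) \<and> coprime K (gen_ideal K {A}) (gen_ideal K {B})"
    by blast
qed blast

lemma coprime_principal_iff_reducible:
  "(\<exists>A \<in> cOb K. \<exists>B \<in> cOb K. proper_ideal K (gen_ideal K {A}) \<and>
      proper_ideal K (gen_ideal K {B}) \<and> coprime K (gen_ideal K {A}) (gen_ideal K {B}))
     \<longleftrightarrow> (\<exists>Z1 Z2. spc_closed K Z1 \<and> spc_closed K Z2 \<and> Z1 \<subset> Spc K \<and> Z2 \<subset> Spc K \<and>
            Spc K = Z1 \<union> Z2)"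
proof
  assume "\<exists>A \<in> cOb K. \<exists>B \<in> cOb K. proper_ideal K (gen_ideal K {A}) \<and>
            proper_ideal K (gen_ideal K {B}) \<and> coprime K (gen_ideal K {A}) (gen_ideal K {B})"
  then obtain A B where "A \<in> cOb K" "B \<in> cOb K" "proper_ideal K (gen_ideal K {A})"
    "proper_ideal K (gen_ideal K {B})" "coprime K (gen_ideal K {A}) (gen_ideal K {B})" by blast
  from coprime_principal_imp_reducible[OF this]
  show "\<exists>Z1 Z2. spc_closed K Z1 \<and> spc_closed K Z2 \<and> Z1 \<subset> Spc K \<and> Z2 \<subset> Spc K \<and>
          Spc K = Z1 \<union> Z2" .
next
  assume "\<exists>Z1 Z2. spc_closed K Z1 \<and> spc_closed K Z2 \<and> Z1 \<subset> Spc K \<and> Z2 \<subset> Spc K \<and>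
            Spc K = Z1 \<union> Z2"
  then obtain Z1 Z2 where "spc_closed K Z1" "spc_closed K Z2" "Z1 \<subset> Spc K" "Z2 \<subset> Spc K"
    "Spc K = Z1 \<union> Z2" by blast
  from reducible_imp_coprime_principal[OF this]
  show "\<exists>A \<in> cOb K. \<exists>B \<in> cOb K. proper_ideal K (gen_ideal K {A}) \<and>
          proper_ideal K (gen_ideal K {B}) \<and> coprime K (gen_ideal K {A}) (gen_ideal K {B})"
    by blast
qed

lemma coprime_iff_two_maximal:
  "(\<exists>I J. proper_ideal K I \<and> proper_ideal K J \<and> coprime K I J)
     \<longleftrightarrow> (\<exists>M1 M2. maximal_ideal K M1 \<and> maximal_ideal K M2 \<and> M1 \<noteq> M2)"
proof
  assume "\<exists>I J. proper_ideal K I \<and> proper_ideal K J \<and> coprime K I J"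
  then obtain I J where I: "proper_ideal K I" and J: "proper_ideal K J" and c: "coprime K I J" by blast
  obtain M1 where M1: "maximal_ideal K M1" "I \<subseteq> M1" using exists_maximal_ideal[OF I] .
  obtain M2 where M2: "maximal_ideal K M2" "J \<subseteq> M2" using exists_maximal_ideal[OF J] .
  note M = M1(1) M2(1)
  have "M1 \<noteq> M2"
  proof
    assume "M1 = M2"
    then show False
      using coprime_not_in_proper[OF c maximal_ideal_proper[OF M1(1)] M1(2)] M2(2) by simp
  qed
  then show "\<exists>M1 M2. maximal_ideal K M1 \<and> maximal_ideal K M2 \<and> M1 \<noteq> M2" using M by blast
next
  assume "\<exists>M1 M2. maximal_ideal K M1 \<and> maximal_ideal K M2 \<and> M1 \<noteq> M2"
  then obtain M1 M2 where "maximal_ideal K M1" "maximal_ideal K M2" "M1 \<noteq> M2" by blast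
  then show "\<exists>I J. proper_ideal K I \<and> proper_ideal K J \<and> coprime K I J"
    using maximal_ideals_coprime maximal_ideal_proper by blast
qed

end

theorem theoremB:
  fixes K :: "('o, 'm) mdc"
  assumes "MDC K"
  shows "((\<exists>I J. proper_ideal K I \<and> proper_ideal K J \<and> coprime K I J)
           \<longleftrightarrow> (\<exists>M1 M2. maximal_ideal K M1 \<and> maximal_ideal K M2 \<and> M1 \<noteq> M2)) \<and>
         ((\<exists>I J. proper_ideal K I \<and> proper_ideal K J \<and> coprime K I J)
           \<longleftrightarrow> (\<exists>I J. principal_ideal K I \<and> principal_ideal K J \<and>
                       proper_ideal K I \<and> proper_ideal K J \<and> coprime K I J)) \<and>
         ((\<exists>I J. proper_ideal K I \<and> proper_ideal K J \<and> coprime K I J)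
           \<longleftrightarrow> (\<exists>Z1 Z2. spc_closed K Z1 \<and> spc_closed K Z2 \<and>
                         Z1 \<subset> Spc K \<and> Z2 \<subset> Spc K \<and> Spc K = Z1 \<union> Z2))"
proof -
  interpret monoidal_triangulated K by unfold_locales (fact assms)
  have "(\<exists>A \<in> cOb K. \<exists>B \<in> cOb K. proper_ideal K (gen_ideal K {A}) \<and>
          proper_ideal K (gen_ideal K {B}) \<and> coprime K (gen_ideal K {A}) (gen_ideal K {B}))
        \<longleftrightarrow> (\<exists>I J. principal_ideal K I \<and> principal_ideal K J \<and>
                       proper_ideal K I \<and> proper_ideal K J \<and> coprime K I J)"
    unfolding principal_ideal_def by blast
  then show ?thesis
    using coprime_iff_two_maximal coprime_iff_coprime_principal coprime_principal_iff_reducible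
    by argo
qed

end
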